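(* Let $K$ be a sequence of positive integers approaching $\infty$. Then $K$ has continuous leading block distribution under $\mathcal F$-expansion if and only if there is a uniform continuation $f$ of $F$ such that $\{f^{-1}(K_n)\}$ is equidistributed.
   Context: $F$: $F_1=1,F_2=2,F_{n+2}=F_{n+1}+F_n$; $\phi$ golden ratio, $\omega=\phi^{-1}$. Zeckendorf expansion $m=\sum_{k=1}^M\epsilon(k)F_{M-k+1}$ (unique, $\epsilon(k)\in\{0,1\}$, $\epsilon(1)=1$, $\epsilon(k)\epsilon(k+1)=0$); $\mathrm{LB}_s(m)=(\epsilon(1),\dots,\epsilon(s))$ if $M\ge s$. Blocks of equal length are compared lexicographically. $\mathcal F^*$: infinite 0/1 sequences $\mu$ with $\mu(k)\mu(k+1)=0$ and no tail equal to $(1,0,1,0,\dots)$; $\mu|s=(\mu(1),\dots,\mu(s))$, $\mu\cdot\widehat F=\sum_{k\ge1}\mu(k)\omega^{k-1}$; $\mu\mapsto\phi(\mu\cdot\widehat F-1)$ is a bijection from $\{\mu\in\mathcal F^*:\mu(1)=1\}$ onto $(0,1)$. $K$ has continuous leading block distribution under $\mathcal F$-expansion if: for every $s\ge2$ and leading block $\mathbf b$ of length $s$ the limit $\lim_n\#\{k\le n:\mathrm{LB}_s(K_k)=\mathbf b\}/n$ exists; for every $\mu\in\mathcal F^*$ with $\mu(1)=1$, $\lim_{s\to\infty}\lim_n\#\{k\le n:\mathrm{LB}_s(K_k)\le\mu|s\}/n$ exists; and $f_K^*:[0,1]\to[0,1]$ with $f_K^*(0)=0$, $f_K^*(1)=1$,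 $f_K^*(\phi(\mu\cdot\widehat F-1))=$ that limit, is continuous and increasing. A uniform continuation of $F$ is an increasing continuous $f:[1,\infty)\to\mathbb{R}$ with $f(n)=F_n$ such that $f_n(p)=\frac{f(n+p)-f(n)}{f(n+1)-f(n)}$ converges uniformly on $[0,1]$ to an increasing continuous function. $\{x_n\}$ equidistributed means $\lim_n\#\{k\le n:\{x_k\}\le\beta\}/n=\beta$ for all $\beta\in[0,1]$. *)

theory Defs
  imports "HOL-Analysis.Analysis"
begin

text \<open>Fibonacci numbers F with F_1 = 1, F_2 = 2, F_(n+2) = F_(n+1) + F_n
  (F_0 = 1 is forced by the recurrence and never used).\<close>
fun FF :: "nat \<Rightarrow> nat" where
  "FF 0 = 1"
| "FF (Suc 0) = 1"
| "FF (Suc (Suc n)) = FF (Suc n) + FF n"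

definition gphi :: real where "gphi = (1 + sqrt 5) / 2"
definition gomega :: real where "gomega = 1 / gphi"

text \<open>A list xs = [eps(1), ..., eps(M)] is the Zeckendorf expansion of m:
  m = sum_{k=1}^M eps(k) F_(M-k+1) (xs ! i = eps(i+1)).\<close>
definition is_zeck :: "nat list \<Rightarrow> nat \<Rightarrow> bool" where
  "is_zeck xs m \<longleftrightarrow> xs \<noteq> [] \<and> hd xs = 1 \<and> set xs \<subseteq> {0, 1} \<and>
     (\<forall>i. Suc i < length xs \<longrightarrow> xs ! i * xs ! Suc i = 0) \<and>
     m = (\<Sum>i<length xs. xs ! i * FF (length xs - i))"

definition zeck :: "nat \<Rightarrow> nat list" where
  "zeck m = (THE xs. is_zeck xs m)"

definition has_LB :: "nat \<Rightarrow> nat \<Rightarrow> nat list \<Rightarrow> bool" where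
  "has_LB s m b \<longleftrightarrow> s \<le> length (zeck m) \<and> take s (zeck m) = b"

definition is_leading_block :: "nat \<Rightarrow> nat list \<Rightarrow> bool" where
  "is_leading_block s b \<longleftrightarrow> (\<exists>m. m > 0 \<and> has_LB s m b)"

definition lex_le :: "nat list \<Rightarrow> nat list \<Rightarrow> bool" where
  "lex_le xs ys \<longleftrightarrow> xs = ys \<or>
     (\<exists>i < min (length xs) (length ys). take i xs = take i ys \<and> xs ! i < ys ! i)"

text \<open>The set F*: sequences mu(1), mu(2), ... (mu 0 is ignored).\<close>
definition Fstar :: "(nat \<Rightarrow> nat) set" where
  "Fstar = {\<mu>. (\<forall>k\<ge>1. \<mu> k \<in> {0, 1}) \<and> (\<forall>k\<ge>1. \<mu> k * \<mu> (Suc k) = 0) \<and>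
      \<not> (\<exists>j\<ge>1. \<forall>i. \<mu> (j + i) = (if even i then 1 else 0))}"

definition restr :: "(nat \<Rightarrow> nat) \<Rightarrow> nat \<Rightarrow> nat list" where
  "restr \<mu> s = map \<mu> [1..<Suc s]"

definition dotF :: "(nat \<Rightarrow> nat) \<Rightarrow> real" where
  "dotF \<mu> = (\<Sum>k. real (\<mu> (Suc k)) * gomega ^ k)"

definition LB_prop :: "(nat \<Rightarrow> nat) \<Rightarrow> nat \<Rightarrow> (nat list \<Rightarrow> bool) \<Rightarrow> nat \<Rightarrow> real" where
  "LB_prop K s P n =
     real (card {k \<in> {1..n}. s \<le> length (zeck (K k)) \<and> P (take s (zeck (K k)))}) / real n"

definition cont_LB_dist :: "(nat \<Rightarrow> nat) \<Rightarrow> bool" where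
  "cont_LB_dist K \<longleftrightarrow>
     (\<forall>s\<ge>2. \<forall>b. is_leading_block s b \<longrightarrow> convergent (LB_prop K s (\<lambda>x. x = b))) \<and>
     (\<forall>\<mu>\<in>Fstar. \<mu> 1 = 1 \<longrightarrow>
        convergent (\<lambda>s. lim (LB_prop K s (\<lambda>x. lex_le x (restr \<mu> s))))) \<and>
     (\<exists>g :: real \<Rightarrow> real. g 0 = 0 \<and> g 1 = 1 \<and>
        (\<forall>\<mu>\<in>Fstar. \<mu> 1 = 1 \<longrightarrow>
           g (gphi * (dotF \<mu> - 1)) = lim (\<lambda>s. lim (LB_prop K s (\<lambda>x. lex_le x (restr \<mu> s))))) \<and>
        continuous_on {0..1} g \<and> strict_mono_on {0..1} g \<and> g ` {0..1} \<subseteq> {0..1})"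

definition uniform_continuation :: "(real \<Rightarrow> real) \<Rightarrow> bool" where
  "uniform_continuation f \<longleftrightarrow>
     strict_mono_on {1..} f \<and> continuous_on {1..} f \<and>
     (\<forall>n::nat. n \<ge> 1 \<longrightarrow> f (real n) = real (FF n)) \<and>
     (\<exists>h :: real \<Rightarrow> real.
        uniform_limit {0..1}
          (\<lambda>n p. (f (real n + p) - f (real n)) / (f (real n + 1) - f (real n))) h sequentially \<and>
        strict_mono_on {0..1} h \<and> continuous_on {0..1} h)"

definition equidistributed :: "(nat \<Rightarrow> real) \<Rightarrow> bool" where
  "equidistributed x \<longleftrightarrow>
     (\<forall>\<beta>\<in>{0..1}. (\<lambda>n. real (card {k \<in> {1..n}. frac (x k) \<le> \<beta>}) / real n) \<longlonglongrightarrow> \<beta>)"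

end

theory Submission
  imports Defs
begin

(* For F_N <= m < F_(N+1) let t(m) = (m - F_N) / F_(N-1) in [0,1) be the normalized position
   of m. The integers with N digits and a given leading block c form an interval, and the
   corresponding interval of positions tends to [alpha(c), beta(c)) with alpha(c) = phi (c.F - 1);
   these left endpoints are dense in [0,1]. Hence K has continuous leading block distribution iff
   the positions t(K_k) have a limit distribution g that is an increasing homeomorphism of [0,1],
   the block frequencies then being g(beta(c)) - g(alpha(c)).
   If f is a uniform continuation with limit profile h, then t(K_k) - h(frac (f^-1 K_k)) tends
   to 0, so frac (f^-1 K_k) is equidistributed iff t(K_k) has limit distribution h^-1.
   Conversely, g gives the continuation that interpolates F_n and F_(n+1) along g^-1 on every
   [n, n+1]; for it frac (f^-1 m) = g (t m). *)

lemma FF_pos: "0 < FF n"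
  by (induction n rule: FF.induct) auto

lemma FF_neq_0 [simp]: "FF n \<noteq> 0"
  using FF_pos[of n] by simp

lemma FF_Suc_pred: "1 \<le> n \<Longrightarrow> FF (Suc n) = FF n + FF (n - 1)"
  by (cases n) auto

lemma FF_less_Suc: "1 \<le> n \<Longrightarrow> FF n < FF (Suc n)"
  using FF_Suc_pred[of n] FF_pos[of "n - 1"] by simp

lemma FF_mono: "m \<le> n \<Longrightarrow> FF m \<le> FF n"
proof (induction n rule: dec_induct)
  case (step n)
  then show ?case by (cases n) auto
qed simp

lemma FF_ge: "n \<le> FF n"
proof (induction n rule: FF.induct)
  case (3 n)
  then show ?case using FF_pos[of n] by simp
qed auto

lemma FF_at_top: "filterlim (\<lambda>n. real (FF n)) at_top sequentially"
  by (rule filterlim_at_top_mono[OF filterlim_real_sequentially]) (use FF_ge in auto)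

section \<open>Zeckendorf words\<close>

fun zeck_word :: "nat list \<Rightarrow> bool" where
  "zeck_word [] = True"
| "zeck_word [x] = (x \<le> 1)"
| "zeck_word (x # y # xs) = (x \<le> 1 \<and> x * y = 0 \<and> zeck_word (y # xs))"

fun zeck_val :: "nat list \<Rightarrow> nat" where
  "zeck_val [] = 0"
| "zeck_val (x # xs) = x * FF (Suc (length xs)) + zeck_val xs"

definition zeck_block :: "nat list \<Rightarrow> bool" where
  "zeck_block c \<longleftrightarrow> zeck_word c \<and> c \<noteq> [] \<and> hd c = 1"

lemma zeck_word_ConsD: "zeck_word (x # xs) \<Longrightarrow> zeck_word xs"
  by (cases xs) auto

lemma zeck_word_digit: "zeck_word xs \<Longrightarrow> x \<in> set xs \<Longrightarrow> x \<le> 1"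
  by (induction xs rule: zeck_word.induct) auto

lemma zeck_word_append:
  "zeck_word (xs @ ys) \<longleftrightarrow> zeck_word xs \<and> zeck_word ys \<and> (xs \<noteq> [] \<longrightarrow> ys \<noteq> [] \<longrightarrow> last xs * hd ys = 0)"
proof (induction xs rule: zeck_word.induct)
  case (2 x)
  then show ?case by (cases ys) auto
qed auto

lemma zeck_word_replicate_0: "zeck_word (replicate k 0)"
  by (induction k) (auto simp: zeck_word_append[of "[0]", simplified])

lemma zeck_word_iff:
  "zeck_word xs \<longleftrightarrow> set xs \<subseteq> {0, 1} \<and> (\<forall>i. Suc i < length xs \<longrightarrow> xs ! i * xs ! Suc i = 0)"
proof (induction xs rule: zeck_word.induct)
  case (3 x y xs)
  have "(\<forall>i. Suc i < length (x # y # xs) \<longrightarrow> (x # y # xs) ! i * (x # y # xs) ! Suc i = 0)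
     \<longleftrightarrow> x * y = 0 \<and> (\<forall>i. Suc i < length (y # xs) \<longrightarrow> (y # xs) ! i * (y # xs) ! Suc i = 0)"
    (is "?L \<longleftrightarrow> ?R")
  proof
    assume ?L
    then show ?R by (auto elim: allE[of _ 0] allE[of _ "Suc i" for i])
  next
    assume ?R
    then show ?L by (auto simp: less_Suc_eq_0_disj nth_Cons split: nat.split)
  qed
  then show ?case using 3 by auto
qed auto

lemma zeck_block_digit: "zeck_block c \<Longrightarrow> x \<in> set c \<Longrightarrow> x \<le> 1"
  unfolding zeck_block_def using zeck_word_digit by blast

lemma zeck_block_last: "zeck_block c \<Longrightarrow> last c \<le> 1"
  unfolding zeck_block_def using zeck_word_digit by auto

lemma zeck_val_eq_sum: "zeck_val xs = (\<Sum>i<length xs. xs ! i * FF (length xs - i))"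
proof (induction xs)
  case (Cons x xs)
  then show ?case unfolding length_Cons sum.lessThan_Suc_shift by simp
qed simp

lemma zeck_val_replicate_0_append: "zeck_val (replicate j 0 @ xs) = zeck_val xs"
  by (induction j) auto

lemma zeck_val_append: "zeck_val (xs @ ys) = zeck_val (xs @ replicate (length ys) 0) + zeck_val ys"
  by (induction xs) (use zeck_val_replicate_0_append[where xs = "[]"] in auto)

lemma zeck_val_less_FF: "zeck_word xs \<Longrightarrow> zeck_val xs < FF (Suc (length xs))"
proof (induction "length xs" arbitrary: xs rule: less_induct)
  case less
  show ?case
  proof (cases xs)
    case (Cons x ys)
    show ?thesis
    proof (cases ys)
      case (Cons y zs)
      have x: "x \<le> 1" "x * y = 0" and words: "zeck_word (y # zs)" "zeck_word zs"
        using less.prems \<open>xs = x # ys\<close> Cons zeck_word_ConsD by auto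
      show ?thesis
      proof (cases "x = 0")
        case True
        then show ?thesis
          using less.hyps[OF _ words(1)] FF_mono[of "Suc (length ys)" "Suc (length xs)"]
            \<open>xs = x # ys\<close> Cons by simp
      next
        case False
        then have "x = 1" "y = 0" using x by auto
        then show ?thesis using less.hyps[OF _ words(2)] \<open>xs = x # ys\<close> Cons by simp
      qed
    qed (use less.prems Cons in simp)
  qed simp
qed

lemma zeck_val_less_lex:
  assumes "zeck_word xs" "zeck_word ys" "length xs = length ys" "i < length xs"
    and "take i xs = take i ys" "xs ! i < ys ! i"
  shows "zeck_val xs < zeck_val ys"
  using assms
proof (induction xs arbitrary: ys i)
  case (Cons x xs)
  then obtain y ys' where ys: "ys = y # ys'" by (cases ys) auto
  have words: "zeck_word xs" "zeck_word ys'" using Cons.prems ys zeck_word_ConsD by auto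
  show ?case
  proof (cases i)
    case 0
    then have "x = 0" "y = 1" using Cons.prems ys zeck_word_digit[of ys y] by auto
    then show ?thesis using zeck_val_less_FF[OF words(1)] Cons.prems ys by simp
  next
    case (Suc j)
    then have "x = y" "zeck_val xs < zeck_val ys'"
      using Cons.prems ys by (auto intro!: Cons.IH[OF words, of j])
    then show ?thesis using ys Cons.prems by simp
  qed
qed simp

lemma first_difference_index:
  assumes "length d = length c" "d \<noteq> c"
  obtains i where "i < length c" "take i d = take i c" "d ! i \<noteq> c ! i"
proof -
  have ex: "\<exists>i. i < length c \<and> d ! i \<noteq> c ! i"
    using assms by (auto simp: list_eq_iff_nth_eq)
  define i where "i = (LEAST i. i < length c \<and> d ! i \<noteq> c ! i)"
  have i: "i < length c" "d ! i \<noteq> c ! i" using LeastI_ex[OF ex] i_def by auto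
  have "d ! j = c ! j" if "j < i" for j
    using not_less_Least[of j "\<lambda>i. i < length c \<and> d ! i \<noteq> c ! i"] that i(1) i_def by auto
  then have "take i d = take i c" using i(1) assms(1) by (intro nth_equalityI) auto
  then show ?thesis using that i by blast
qed

lemma zeck_val_inj:
  assumes "zeck_word xs" "zeck_word ys" "length xs = length ys" "zeck_val xs = zeck_val ys"
  shows "xs = ys"
proof (rule ccontr)
  assume "xs \<noteq> ys"
  then obtain i where i: "i < length ys" "take i xs = take i ys" "xs ! i \<noteq> ys ! i"
    using first_difference_index assms(3) by metis
  then have "xs ! i < ys ! i \<or> ys ! i < xs ! i" by auto
  then show False
  proof
    assume "xs ! i < ys ! i"
    then show False using zeck_val_less_lex[OF assms(1-3)] i assms(3,4) by simp
  next
    assume "ys ! i < xs ! i"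
    then show False
      using zeck_val_less_lex[OF assms(2,1) assms(3)[symmetric]] i(1) i(2)[symmetric] assms(3,4)
      by simp
  qed
qed

lemma zeck_word_exists: "m < FF (Suc n) \<Longrightarrow> \<exists>xs. zeck_word xs \<and> length xs = n \<and> zeck_val xs = m"
proof (induction n arbitrary: m rule: less_induct)
  case (less n)
  show ?case
  proof (cases n)
    case 0
    then show ?thesis using less.prems by (auto intro!: exI[of _ "[]"])
  next
    case (Suc k)
    show ?thesis
    proof (cases "m < FF (Suc k)")
      case True
      then obtain xs where xs: "zeck_word xs" "length xs = k" "zeck_val xs = m"
        using less.IH[of k m] Suc by auto
      then have "zeck_word (0 # xs)" by (cases xs) auto
      then show ?thesis using xs Suc by (auto intro!: exI[of _ "0 # xs"])
    next
      case False
      then have rest: "m - FF (Suc k) < FF k" using less.prems Suc by (cases k) auto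
      show ?thesis
      proof (cases k)
        case 0
        then show ?thesis using rest False Suc by (auto intro!: exI[of _ "[1]"])
      next
        case (Suc j)
        then obtain xs where xs: "zeck_word xs" "length xs = j" "zeck_val xs = m - FF (Suc k)"
          using less.IH[of j "m - FF (Suc k)"] rest \<open>n = Suc k\<close> by auto
        then have "zeck_word (1 # 0 # xs)" by (cases xs) auto
        then show ?thesis using xs Suc \<open>n = Suc k\<close> False
          by (auto intro!: exI[of _ "1 # 0 # xs"])
      qed
    qed
  qed
qed

lemma zeck_block_val_bounds:
  "zeck_block c \<Longrightarrow> FF (length c) \<le> zeck_val c \<and> zeck_val c < FF (Suc (length c))"
proof -
  assume c: "zeck_block c"
  then obtain cs where "c = 1 # cs" "zeck_word c" by (cases c) (auto simp: zeck_block_def)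
  then show ?thesis using zeck_val_less_FF[OF \<open>zeck_word c\<close>] by simp
qed

lemma zeck_block_length_eq:
  assumes "zeck_block c" "1 \<le> N" "FF N \<le> zeck_val c" "zeck_val c < FF (Suc N)"
  shows "length c = N"
proof -
  have "\<not> Suc (length c) \<le> N"
    using zeck_block_val_bounds[OF assms(1)] FF_mono[of "Suc (length c)" N] assms(3) by linarith
  moreover have "\<not> Suc N \<le> length c"
    using zeck_block_val_bounds[OF assms(1)] FF_mono[of "Suc N" "length c"] assms(4) by linarith
  ultimately show ?thesis by simp
qed

lemma zeck_block_exists: "0 < m \<Longrightarrow> \<exists>c. zeck_block c \<and> zeck_val c = m"
proof -
  assume m: "0 < m"
  have "m < FF (Suc m)" using FF_ge[of "Suc m"] by simp
  then obtain xs where xs: "zeck_word xs" "zeck_val xs = m" using zeck_word_exists by blast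
  define c where "c = dropWhile (\<lambda>x. x = 0) xs"
  have "zeck_word c" "zeck_val c = m"
    using xs unfolding c_def by (induction xs) (auto dest: zeck_word_ConsD)
  moreover have "c \<noteq> []" using m \<open>zeck_val c = m\<close> by auto
  moreover have "hd c \<noteq> 0" using \<open>c \<noteq> []\<close> hd_dropWhile c_def by blast
  ultimately show ?thesis using zeck_word_digit[of c "hd c"] unfolding zeck_block_def by force
qed

lemma zeck_block_unique:
  assumes "zeck_block c" "zeck_block d" "zeck_val c = zeck_val d"
  shows "c = d"
proof -
  have "length c \<ge> 1" using assms(1) unfolding zeck_block_def by (cases c) auto
  then have "length d = length c"
    using zeck_block_length_eq[OF assms(2)] zeck_block_val_bounds[OF assms(1)] assms(3) by simp
  then show ?thesis using zeck_val_inj assms unfolding zeck_block_def by metis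
qed

lemma is_zeck_iff: "is_zeck xs m \<longleftrightarrow> zeck_block xs \<and> zeck_val xs = m"
  unfolding is_zeck_def zeck_block_def zeck_word_iff zeck_val_eq_sum by auto

lemma zeck_expansion: "0 < m \<Longrightarrow> zeck_block (zeck m) \<and> zeck_val (zeck m) = m"
proof -
  assume "0 < m"
  then obtain c where c: "zeck_block c" "zeck_val c = m" using zeck_block_exists by blast
  have "is_zeck (zeck m) m"
    unfolding zeck_def by (rule theI[of _ c]) (use c zeck_block_unique in \<open>auto simp: is_zeck_iff\<close>)
  then show ?thesis by (simp add: is_zeck_iff)
qed

lemma zeck_eqI:
  assumes "zeck_block c" "zeck_val c = m"
  shows "zeck m = c"
proof -
  have "0 < m" using zeck_block_val_bounds[OF assms(1)] FF_pos[of "length c"] assms(2) by linarith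
  then show ?thesis using zeck_expansion zeck_block_unique assms by metis
qed

lemma length_zeck_bounds:
  "0 < m \<Longrightarrow> 1 \<le> length (zeck m) \<and> FF (length (zeck m)) \<le> m \<and> m < FF (Suc (length (zeck m)))"
  using zeck_expansion[of m] zeck_block_val_bounds[of "zeck m"] by (cases "zeck m") (auto simp: zeck_block_def)

lemma length_zeck_eq: "1 \<le> N \<Longrightarrow> FF N \<le> m \<Longrightarrow> m < FF (Suc N) \<Longrightarrow> length (zeck m) = N"
  using zeck_expansion[of m] zeck_block_length_eq[of "zeck m" N] FF_pos[of N] by auto

lemma leading_block_zeck_block:
  assumes "is_leading_block s b" "1 \<le> s"
  shows "zeck_block b \<and> length b = s"
proof -
  obtain m where m: "0 < m" "s \<le> length (zeck m)" "take s (zeck m) = b"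
    using assms(1) unfolding is_leading_block_def has_LB_def by blast
  have z: "zeck_word (take s (zeck m) @ drop s (zeck m))" "zeck m \<noteq> []" "hd (zeck m) = 1"
    using zeck_expansion[OF m(1)] unfolding zeck_block_def by auto
  then have "zeck_word b" using m(3) unfolding zeck_word_append by simp
  moreover have "b \<noteq> []" "hd b = 1" using m assms(2) z(2,3) by (auto simp: hd_take)
  ultimately show ?thesis using m unfolding zeck_block_def by auto
qed

section \<open>Leading blocks as intervals\<close>

definition block_start :: "nat list \<Rightarrow> nat \<Rightarrow> nat" where
  "block_start c N = zeck_val (c @ replicate (N - length c) 0)"

definition block_size :: "nat list \<Rightarrow> nat \<Rightarrow> nat" where
  "block_size c N = FF (N - length c + 1 - last c)"

lemma zeck_val_append_block_start:
  "length c + length r = N \<Longrightarrow> zeck_val (c @ r) = block_start c N + zeck_val r"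
proof -
  assume "length c + length r = N"
  then have "N - length c = length r" by simp
  then show ?thesis unfolding block_start_def using zeck_val_append[of c r] by simp
qed

lemma block_extension_exists:
  assumes "zeck_block c" "length c < N" "r < block_size c N"
  obtains ws where "zeck_word (c @ ws)" "length ws = N - length c"
    "zeck_val (c @ ws) = block_start c N + r"
proof (cases "last c = 0")
  case True
  then obtain ws where ws: "zeck_word ws" "length ws = N - length c" "zeck_val ws = r"
    using zeck_word_exists assms(3) unfolding block_size_def by auto
  then have "zeck_word (c @ ws)" using True assms(1) unfolding zeck_block_def zeck_word_append by auto
  then show ?thesis using that ws zeck_val_append_block_start[of c ws N] assms(2) by simp
next
  case False
  then have "last c = 1" using zeck_block_last[OF assms(1)] by simp
  moreover have "Suc (N - length c - 1) = N - length c + 1 - last c" using assms(2) \<open>last c = 1\<close> by simp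
  ultimately obtain ws where ws: "zeck_word ws" "length ws = N - length c - 1" "zeck_val ws = r"
    using zeck_word_exists[of r "N - length c - 1"] assms(3) unfolding block_size_def by auto
  then have "zeck_word (0 # ws)" by (cases ws) auto
  then have "zeck_word (c @ 0 # ws)" using assms(1) unfolding zeck_block_def zeck_word_append by auto
  then show ?thesis
    using that[of "0 # ws"] ws zeck_val_append_block_start[of c "0 # ws" N] assms(2) by simp
qed

lemma take_zeck_eq_iff:
  assumes "zeck_block c" "0 < m" "length (zeck m) = N" "length c < N"
  shows "take (length c) (zeck m) = c \<longleftrightarrow> block_start c N \<le> m \<and> m < block_start c N + block_size c N"
proof
  assume take: "take (length c) (zeck m) = c"
  define r where "r = drop (length c) (zeck m)"
  have z: "zeck m = c @ r" using take r_def by (metis append_take_drop_id)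
  have lr: "length r = N - length c" and "r \<noteq> []" using r_def assms(3,4) by auto
  have "zeck_word (c @ r)" using zeck_expansion[OF assms(2)] z by (simp add: zeck_block_def)
  then have r: "zeck_word r" "last c * hd r = 0"
    using \<open>r \<noteq> []\<close> assms(1) unfolding zeck_word_append zeck_block_def by auto
  have m: "m = block_start c N + zeck_val r"
    using zeck_val_append_block_start[of c r N] lr assms(3,4) zeck_expansion[OF assms(2)] z by simp
  have "zeck_val r < block_size c N"
  proof (cases "last c = 0")
    case True
    then show ?thesis using zeck_val_less_FF[OF r(1)] lr unfolding block_size_def by simp
  next
    case False
    then have "last c = 1" using zeck_block_last[OF assms(1)] by simp
    then have "hd r = 0" using r(2) by simp
    then obtain r' where r': "r = 0 # r'" using \<open>r \<noteq> []\<close> by (metis list.collapse)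
    then have "zeck_val r' < FF (Suc (length r'))"
      using zeck_val_less_FF zeck_word_ConsD[of 0 r'] r(1) by simp
    then show ?thesis using r' lr \<open>last c = 1\<close> unfolding block_size_def by simp
  qed
  then show "block_start c N \<le> m \<and> m < block_start c N + block_size c N" using m by simp
next
  assume m: "block_start c N \<le> m \<and> m < block_start c N + block_size c N"
  then have "m - block_start c N < block_size c N" by linarith
  then obtain ws where "zeck_word (c @ ws)" "zeck_val (c @ ws) = m"
    using block_extension_exists[OF assms(1), of N "m - block_start c N"] assms(4) m
    by (metis le_add_diff_inverse)
  moreover have "c @ ws \<noteq> []" "hd (c @ ws) = 1" using assms(1) by (auto simp: zeck_block_def)
  ultimately have "zeck m = c @ ws" by (intro zeck_eqI) (auto simp: zeck_block_def)
  then show "take (length c) (zeck m) = c" by simp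
qed

lemma lex_le_iff_first_difference:
  assumes "length d = length c" "i < length c" "take i d = take i c" "d ! i \<noteq> c ! i"
  shows "lex_le d c \<longleftrightarrow> d ! i < c ! i"
proof
  assume "lex_le d c"
  moreover have "d \<noteq> c" using assms(4) by auto
  ultimately obtain j where j: "j < length c" "take j d = take j c" "d ! j < c ! j"
    using assms(1) unfolding lex_le_def by auto
  have "d ! k = c ! k" if "k < i" for k
    using nth_take[OF that, of d] nth_take[OF that, of c] assms(3) by simp
  moreover have "d ! k = c ! k" if "k < j" for k
    using nth_take[OF that, of d] nth_take[OF that, of c] j(2) by simp
  ultimately have "j = i" using j(3) assms(4) by (metis less_irrefl nat_neq_iff)
  then show "d ! i < c ! i" using j(3) by simp
next
  assume "d ! i < c ! i"
  then show "lex_le d c" using assms(1-3) unfolding lex_le_def by auto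
qed

lemma lex_le_take_zeck_iff:
  assumes "zeck_block c" "0 < m" "length (zeck m) = N" "length c < N"
  shows "lex_le (take (length c) (zeck m)) c \<longleftrightarrow> m < block_start c N + block_size c N"
proof (cases "take (length c) (zeck m) = c")
  case True
  then show ?thesis using take_zeck_eq_iff[OF assms] by (simp add: lex_le_def)
next
  case False
  define z where "z = zeck m"
  define d where "d = take (length c) z"
  have z: "zeck_word z" "zeck_val z = m" "length z = N"
    using zeck_expansion[OF assms(2)] z_def assms(3) unfolding zeck_block_def by auto
  have "length d = length c" "d \<noteq> c" using d_def z(3) False z_def assms(3,4) by auto
  then obtain i where i: "i < length c" "take i d = take i c" "d ! i \<noteq> c ! i"
    by (rule first_difference_index)
  have lex: "lex_le d c \<longleftrightarrow> d ! i < c ! i"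
    using lex_le_iff_first_difference[OF \<open>length d = length c\<close> i] .
  have zi: "z ! i = d ! i" "take i z = take i c" using d_def i by (auto simp: min_def)
  show ?thesis
  proof (cases "d ! i < c ! i")
    case True
    define w where "w = c @ replicate (N - length c) 0"
    have w: "zeck_word w" "length w = N" "w ! i = c ! i" "take i w = take i c"
      using assms(1) assms(4) i(1) unfolding w_def zeck_block_def zeck_word_append
      by (auto simp: zeck_word_replicate_0 nth_append)
    have "zeck_val z < zeck_val w"
      by (rule zeck_val_less_lex[of z w i]) (use z w i zi True assms(4) in auto)
    then show ?thesis using True lex z unfolding w_def block_start_def d_def z_def by simp
  next
    case False
    obtain ws where ws: "zeck_word (c @ ws)" "length ws = N - length c"
      "zeck_val (c @ ws) = block_start c N + (block_size c N - 1)"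
      using block_extension_exists[OF assms(1) assms(4), of "block_size c N - 1"]
        FF_pos[of "N - length c + 1 - last c"] unfolding block_size_def by auto
    have "zeck_val (c @ ws) < zeck_val z"
      by (rule zeck_val_less_lex[of "c @ ws" z i])
        (use z ws assms(4) i zi False in \<open>auto simp: nth_append\<close>)
    moreover have "0 < block_size c N" by (simp add: block_size_def FF_pos)
    ultimately have "block_start c N + block_size c N \<le> m" using ws(3) z(2) by linarith
    then show ?thesis using False lex unfolding d_def z_def by simp
  qed
qed

lemma gphi_gt_1: "1 < gphi"
proof -
  have "2 < sqrt 5" by (rule real_less_rsqrt) simp
  then show ?thesis unfolding gphi_def by simp
qed

lemma gphi_square: "gphi * gphi = gphi + 1"
  unfolding gphi_def by (simp add: field_simps)

lemma gomega_eq: "gomega = gphi - 1"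
  unfolding gomega_def using gphi_square gphi_gt_1 by (simp add: field_simps)

lemma gphi_times_gomega: "gphi * gomega = 1"
  unfolding gomega_def using gphi_gt_1 by simp

lemma gomega_pos: "0 < gomega"
  unfolding gomega_def using gphi_gt_1 by simp

lemma gomega_less_two_thirds: "gomega < 2 / 3"
proof -
  have "sqrt 5 < 7 / 3" by (rule real_less_lsqrt) (auto simp: power2_eq_square)
  then show ?thesis unfolding gomega_eq gphi_def by simp
qed

lemma gomega_less_1: "gomega < 1"
  using gomega_less_two_thirds by simp

lemma gomega_square: "gomega * gomega = 1 - gomega"
  using gphi_square unfolding gomega_eq by (simp add: algebra_simps)

lemma FF_gomega_diff: "real (FF n) - gomega * real (FF (Suc n)) = (- gomega) ^ n * gomega ^ 2"
proof (induction n)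
  case 0
  then show ?case using gomega_square by (simp add: power2_eq_square)
next
  case (Suc n)
  have "real (FF (Suc n)) - gomega * real (FF (Suc (Suc n)))
      = real (FF (Suc n)) * (1 - gomega) - gomega * real (FF n)"
    by (simp add: algebra_simps)
  also have "\<dots> = real (FF (Suc n)) * (gomega * gomega) - gomega * real (FF n)"
    unfolding gomega_square ..
  also have "\<dots> = - gomega * (real (FF n) - gomega * real (FF (Suc n)))"
    by (simp add: algebra_simps)
  finally show ?case using Suc by simp
qed

lemma abs_FF_gomega_diff_le: "\<bar>real (FF n) - gomega * real (FF (Suc n))\<bar> \<le> gomega ^ Suc (Suc n)"
  unfolding FF_gomega_diff using gomega_pos by (simp add: abs_mult power_abs power2_eq_square)

lemma tendsto_div_FF:
  assumes "eventually (\<lambda>N. \<bar>g N - L * real (FF N)\<bar> \<le> C) sequentially"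
  shows "(\<lambda>N. g N / real (FF N)) \<longlonglongrightarrow> L"
proof (rule LIM_zero_cancel, rule Lim_null_comparison)
  show "(\<lambda>N. C / real (FF N)) \<longlonglongrightarrow> 0"
    by (rule tendsto_divide_0[OF tendsto_const FF_at_top[THEN filterlim_at_top_imp_at_infinity]])
  show "\<forall>\<^sub>F N in sequentially. norm (g N / real (FF N) - L) \<le> C / real (FF N)"
    using assms
  proof (rule eventually_mono)
    fix N assume "\<bar>g N - L * real (FF N)\<bar> \<le> C"
    moreover have "0 < real (FF N)" using FF_pos by simp
    moreover have "g N / real (FF N) - L = (g N - L * real (FF N)) / real (FF N)"
      using FF_pos[of N] by (simp add: field_simps)
    ultimately show "norm (g N / real (FF N) - L) \<le> C / real (FF N)"
      by (simp add: abs_divide divide_right_mono)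
  qed
qed

lemma FF_ratio_tendsto: "(\<lambda>N. real (FF N) / real (FF (N - 1))) \<longlonglongrightarrow> gphi"
proof -
  have "(\<lambda>N. real (FF (N - 1)) / real (FF N)) \<longlonglongrightarrow> gomega"
  proof (rule tendsto_div_FF[where C = 1])
    show "\<forall>\<^sub>F N in sequentially. \<bar>real (FF (N - 1)) - gomega * real (FF N)\<bar> \<le> 1"
      using eventually_ge_at_top[of 1]
    proof (rule eventually_mono)
      fix N :: nat assume "1 \<le> N"
      then have "\<bar>real (FF (N - 1)) - gomega * real (FF N)\<bar> \<le> gomega ^ Suc (Suc (N - 1))"
        using abs_FF_gomega_diff_le[of "N - 1"] by simp
      also have "\<dots> \<le> 1" using gomega_pos gomega_less_1 by (intro power_le_one) auto
      finally show "\<bar>real (FF (N - 1)) - gomega * real (FF N)\<bar> \<le> 1" .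
    qed
  qed
  then have "(\<lambda>N. inverse (real (FF (N - 1)) / real (FF N))) \<longlonglongrightarrow> inverse gomega"
    using gomega_pos by (intro tendsto_inverse) auto
  then show ?thesis unfolding gomega_def by simp
qed

definition block_weight :: "nat list \<Rightarrow> real" where
  "block_weight c = (\<Sum>i<length c. real (c ! i) * gomega ^ i)"

lemma block_weight_Nil [simp]: "block_weight [] = 0"
  unfolding block_weight_def by simp

lemma block_weight_Cons [simp]: "block_weight (x # c) = real x + gomega * block_weight c"
  unfolding block_weight_def length_Cons sum.lessThan_Suc_shift
  by (simp add: sum_distrib_left algebra_simps)

lemma block_weight_append_replicate_0: "block_weight (c @ replicate k 0) = block_weight c"
proof -
  have "block_weight (replicate k 0) = 0" by (induction k) simp_all
  then show ?thesis by (induction c) simp_all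
qed

lemma block_weight_bounds: "\<forall>x\<in>set c. x \<le> 1 \<Longrightarrow> 0 \<le> block_weight c \<and> block_weight c \<le> 3"
proof (induction c)
  case (Cons x c)
  then have "real x \<le> 1" "0 \<le> block_weight c" "block_weight c \<le> 3" by auto
  moreover have "gomega * block_weight c \<le> 2 / 3 * 3"
    using calculation gomega_less_two_thirds gomega_pos by (intro mult_mono) auto
  ultimately show ?case using gomega_pos by simp
qed simp

lemma zeck_val_block_weight_approx:
  assumes "\<forall>x\<in>set c. x \<le> 1"
  shows "\<bar>real (zeck_val (c @ replicate k 0)) - block_weight c * real (FF (length c + k))\<bar>
           \<le> 3 - 3 * gomega ^ length c"
  using assms
proof (induction c)
  case Nil
  then show ?case using zeck_val_replicate_0_append[of k "[]"] by simp
next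
  case (Cons x c)
  define N where "N = length c + k"
  have w: "0 \<le> block_weight c" "block_weight c \<le> 3" using block_weight_bounds Cons.prems by auto
  have IH: "\<bar>real (zeck_val (c @ replicate k 0)) - block_weight c * real (FF N)\<bar> \<le> 3 - 3 * gomega ^ length c"
    using Cons N_def by auto
  have "real (zeck_val ((x # c) @ replicate k 0)) - block_weight (x # c) * real (FF (length (x # c) + k))
      = (real (zeck_val (c @ replicate k 0)) - block_weight c * real (FF N))
        + block_weight c * (real (FF N) - gomega * real (FF (Suc N)))"
    using N_def by (simp add: algebra_simps)
  also have "\<bar>\<dots>\<bar> \<le> (3 - 3 * gomega ^ length c) + 3 * gomega ^ Suc (Suc N)"
  proof -
    have "\<bar>block_weight c * (real (FF N) - gomega * real (FF (Suc N)))\<bar> \<le> 3 * gomega ^ Suc (Suc N)"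
      unfolding abs_mult using w abs_FF_gomega_diff_le[of N] by (intro mult_mono) auto
    then show ?thesis using IH by linarith
  qed
  also have "\<dots> \<le> 3 - 3 * gomega ^ length (x # c)"
  proof -
    have "gomega ^ Suc (Suc N) \<le> gomega ^ (length c + 2)"
      using gomega_pos gomega_less_1 N_def by (intro power_decreasing) auto
    also have "\<dots> = gomega ^ length c * (gomega * gomega)"
      by (simp add: power_add power2_eq_square)
    also have "\<dots> = gomega ^ length c - gomega ^ Suc (length c)"
      unfolding gomega_square by (simp add: algebra_simps)
    finally show ?thesis by simp
  qed
  finally show ?case .
qed

lemma abs_zeck_val_block_weight_le_3:
  "\<forall>x\<in>set c. x \<le> 1 \<Longrightarrow>
     \<bar>real (zeck_val (c @ replicate k 0)) - block_weight c * real (FF (length c + k))\<bar> \<le> 3"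
  using zeck_val_block_weight_approx[of c k] gomega_pos by (smt (verit) zero_le_power)

section \<open>The normalized position of an integer\<close>

text \<open>Since \<open>F_(N+1) - F_N = F_(N-1)\<close>, this rescales \<open>[F_N, F_(N+1))\<close> to \<open>[0, 1)\<close>.\<close>

definition zeck_pos :: "nat \<Rightarrow> real" where
  "zeck_pos m = (real m - real (FF (length (zeck m)))) / real (FF (length (zeck m) - 1))"

definition block_lower :: "nat list \<Rightarrow> nat \<Rightarrow> real" where
  "block_lower c N = (real (block_start c N) - real (FF N)) / real (FF (N - 1))"

definition block_upper :: "nat list \<Rightarrow> nat \<Rightarrow> real" where
  "block_upper c N = (real (block_start c N) + real (block_size c N) - real (FF N)) / real (FF (N - 1))"

definition block_lower_lim :: "nat list \<Rightarrow> real" where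
  "block_lower_lim c = gphi * (block_weight c - 1)"

definition block_upper_lim :: "nat list \<Rightarrow> real" where
  "block_upper_lim c = gphi * (block_weight c + gomega ^ (length c - 1 + last c) - 1)"

lemma zeck_pos_range: "0 < m \<Longrightarrow> 0 \<le> zeck_pos m \<and> zeck_pos m < 1"
proof -
  assume m: "0 < m"
  define N where "N = length (zeck m)"
  have N: "1 \<le> N" "FF N \<le> m" "m < FF N + FF (N - 1)"
    using length_zeck_bounds[OF m] FF_Suc_pred[of N] N_def by auto
  have "0 < real (FF (N - 1))" using FF_pos by simp
  then show ?thesis using N unfolding zeck_pos_def N_def[symmetric] by (simp add: divide_simps)
qed

lemma take_zeck_eq_iff_zeck_pos:
  assumes "zeck_block c" "0 < m" "length (zeck m) = N" "length c < N"
  shows "take (length c) (zeck m) = c \<longleftrightarrow> block_lower c N \<le> zeck_pos m \<and> zeck_pos m < block_upper c N"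
proof -
  have "0 < real (FF (N - 1))" using FF_pos by simp
  then show ?thesis
    unfolding take_zeck_eq_iff[OF assms] block_lower_def block_upper_def zeck_pos_def assms(3)
    by (simp add: divide_le_cancel divide_less_cancel flip: of_nat_add)
qed

lemma lex_le_take_zeck_iff_zeck_pos:
  assumes "zeck_block c" "0 < m" "length (zeck m) = N" "length c < N"
  shows "lex_le (take (length c) (zeck m)) c \<longleftrightarrow> zeck_pos m < block_upper c N"
proof -
  have "0 < real (FF (N - 1))" using FF_pos by simp
  then show ?thesis
    unfolding lex_le_take_zeck_iff[OF assms] block_upper_def zeck_pos_def assms(3)
    by (simp add: divide_less_cancel flip: of_nat_add)
qed

lemma block_start_div_FF_tendsto:
  assumes "zeck_block c"
  shows "(\<lambda>N. real (block_start c N) / real (FF N)) \<longlonglongrightarrow> block_weight c"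
proof (rule tendsto_div_FF[where C = 3])
  show "\<forall>\<^sub>F N in sequentially. \<bar>real (block_start c N) - block_weight c * real (FF N)\<bar> \<le> 3"
    using eventually_ge_at_top[of "length c"]
  proof (rule eventually_mono)
    fix N assume "length c \<le> N"
    then show "\<bar>real (block_start c N) - block_weight c * real (FF N)\<bar> \<le> 3"
      using abs_zeck_val_block_weight_le_3[of c "N - length c"] zeck_block_digit[OF assms]
      unfolding block_start_def by simp
  qed
qed

lemma block_size_div_FF_tendsto:
  assumes "zeck_block c"
  shows "(\<lambda>N. real (block_size c N) / real (FF N)) \<longlonglongrightarrow> gomega ^ (length c - 1 + last c)"
proof (rule tendsto_div_FF[where C = 3])
  define j where "j = length c - 1 + last c"
  define w where "w = replicate j 0 @ [1::nat]"
  have c: "last c \<le> 1" "1 \<le> length c"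
    using zeck_block_last[OF assms] assms unfolding zeck_block_def by (auto simp: Suc_le_eq)
  have w: "block_weight w = gomega ^ j" unfolding w_def by (induction j) auto
  show "\<forall>\<^sub>F N in sequentially. \<bar>real (block_size c N) - gomega ^ (length c - 1 + last c) * real (FF N)\<bar> \<le> 3"
    using eventually_ge_at_top[of "length c + 1"]
  proof (rule eventually_mono)
    fix N assume N: "length c + 1 \<le> N"
    have "zeck_val (w @ replicate (N - j - 1) 0) = FF (Suc (N - j - 1))"
      unfolding w_def using zeck_val_replicate_0_append[of j "1 # replicate (N - j - 1) 0"]
        zeck_val_replicate_0_append[of "N - j - 1" "[]"] by simp
    moreover have "Suc (N - j - 1) = N - length c + 1 - last c" "length w + (N - j - 1) = N"
      using N c unfolding j_def w_def by auto
    ultimately show "\<bar>real (block_size c N) - gomega ^ (length c - 1 + last c) * real (FF N)\<bar> \<le> 3"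
      using abs_zeck_val_block_weight_le_3[of w "N - j - 1"] w
      unfolding block_size_def j_def w_def by simp
  qed
qed

lemma block_lower_tendsto: "zeck_block c \<Longrightarrow> block_lower c \<longlonglongrightarrow> block_lower_lim c"
proof -
  assume c: "zeck_block c"
  have "(\<lambda>N. (real (block_start c N) / real (FF N) - 1) * (real (FF N) / real (FF (N - 1))))
      \<longlonglongrightarrow> (block_weight c - 1) * gphi"
    by (intro tendsto_intros block_start_div_FF_tendsto[OF c] FF_ratio_tendsto)
  moreover have "block_lower c = (\<lambda>N. (real (block_start c N) / real (FF N) - 1) * (real (FF N) / real (FF (N - 1))))"
    unfolding block_lower_def by (intro ext) (simp add: field_simps)
  ultimately show ?thesis unfolding block_lower_lim_def by (simp only: mult.commute[of _ gphi])
qed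

lemma block_upper_tendsto: "zeck_block c \<Longrightarrow> block_upper c \<longlonglongrightarrow> block_upper_lim c"
proof -
  assume c: "zeck_block c"
  have "(\<lambda>N. (real (block_start c N) / real (FF N) + real (block_size c N) / real (FF N) - 1)
        * (real (FF N) / real (FF (N - 1))))
      \<longlonglongrightarrow> (block_weight c + gomega ^ (length c - 1 + last c) - 1) * gphi"
    by (intro tendsto_intros block_start_div_FF_tendsto[OF c] block_size_div_FF_tendsto[OF c]
        FF_ratio_tendsto)
  moreover have "block_upper c = (\<lambda>N. (real (block_start c N) / real (FF N)
        + real (block_size c N) / real (FF N) - 1) * (real (FF N) / real (FF (N - 1))))"
    unfolding block_upper_def by (intro ext) (simp add: field_simps)
  ultimately show ?thesis unfolding block_upper_lim_def by (simp only: mult.commute[of _ gphi])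
qed

lemma block_lower_le_upper: "block_lower c N \<le> block_upper c N"
  unfolding block_lower_def block_upper_def by (simp add: divide_right_mono)

lemma zeck_pos_approx:
  assumes m: "0 < m"
  shows "\<bar>zeck_pos m - block_lower_lim (zeck m)\<bar> \<le> 5 / real (FF (length (zeck m) - 1))"
proof -
  define c where "c = zeck m"
  define N where "N = length c"
  have N: "1 \<le> N" using length_zeck_bounds[OF m] c_def N_def by simp
  have c: "zeck_block c" "zeck_val c = m" using zeck_expansion[OF m] c_def by auto
  have digits: "\<forall>x\<in>set c. x \<le> 1" using zeck_block_digit[OF c(1)] by blast
  have w: "0 \<le> block_weight c" "block_weight c \<le> 3" using block_weight_bounds[OF digits] by auto
  have approx: "\<bar>real m - block_weight c * real (FF N)\<bar> \<le> 3"
    using abs_zeck_val_block_weight_le_3[OF digits, of 0] c(2) N_def by simp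
  have "\<bar>real (FF (N - 1)) - gomega * real (FF N)\<bar> \<le> gomega ^ Suc (Suc (N - 1))"
    using abs_FF_gomega_diff_le[of "N - 1"] N by simp
  also have "\<dots> \<le> gomega ^ 1"
    using gomega_pos gomega_less_1 by (intro power_decreasing) auto
  finally have "gphi * \<bar>real (FF (N - 1)) - gomega * real (FF N)\<bar> \<le> gphi * gomega"
    using gphi_gt_1 by (intro mult_left_mono) auto
  moreover have "real (FF N) - gphi * real (FF (N - 1)) = - gphi * (real (FF (N - 1)) - gomega * real (FF N))"
    using gphi_times_gomega by (simp add: algebra_simps)
  ultimately have "\<bar>real (FF N) - gphi * real (FF (N - 1))\<bar> \<le> 1"
    using gphi_times_gomega gphi_gt_1 by (simp add: abs_mult)
  then have "\<bar>(block_weight c - 1) * (real (FF N) - gphi * real (FF (N - 1)))\<bar> \<le> 2 * 1"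
    unfolding abs_mult using w by (intro mult_mono) auto
  moreover have "zeck_pos m - block_lower_lim c
      = ((real m - block_weight c * real (FF N))
         + (block_weight c - 1) * (real (FF N) - gphi * real (FF (N - 1)))) / real (FF (N - 1))"
    unfolding zeck_pos_def block_lower_lim_def c_def[symmetric] N_def[symmetric]
    using FF_pos[of "N - 1"] by (simp add: field_simps)
  ultimately have "\<bar>zeck_pos m - block_lower_lim c\<bar> \<le> 5 / real (FF (N - 1))"
    using approx FF_pos[of "N - 1"] by (simp add: abs_divide divide_right_mono)
  then show ?thesis using c_def N_def by simp
qed

lemma block_lower_lim_dense:
  assumes "0 \<le> x" "x < y" "y \<le> 1"
  obtains c where "zeck_block c" "x < block_lower_lim c" "block_lower_lim c < y"
proof -
  define d where "d = y - x"
  define N where "N = nat \<lceil>20 / d\<rceil> + 2"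
  define F where "F = real (FF (N - 1))"
  have d: "0 < d" using assms d_def by simp
  have "real (N - 1) \<le> F" using FF_ge[of "N - 1"] F_def by simp
  moreover have "20 / d < real (N - 1)" using N_def by linarith
  ultimately have "20 / d < F" by linarith
  then have Fd: "20 < F * d" using d by (simp add: field_simps)
  have F: "0 < F" using F_def FF_pos by simp
  define z where "z = (x + y) / 2"
  define j where "j = nat \<lceil>z * F\<rceil>"
  have "0 \<le> z * F" using assms F z_def by simp
  then have j: "z * F \<le> real j" "real j < z * F + 1" using j_def by linarith+
  have "z * F \<le> (1 - d / 2) * F"
    using F assms unfolding z_def d_def by (intro mult_right_mono) (auto simp: field_simps)
  then have "j < FF (N - 1)" using j Fd F_def by (simp add: algebra_simps)
  define m where "m = FF N + j"
  have N: "1 \<le> N" using N_def by simp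
  have "FF N \<le> m" "m < FF (Suc N)" using m_def \<open>j < FF (N - 1)\<close> FF_Suc_pred[OF N] by auto
  then have len: "length (zeck m) = N" using length_zeck_eq[OF N] by simp
  have m: "0 < m" using FF_pos[of N] m_def by simp
  have pos: "zeck_pos m = real j / F" unfolding zeck_pos_def len F_def by (simp add: m_def)
  have "\<bar>real j / F - block_lower_lim (zeck m)\<bar> \<le> 5 / F"
    using zeck_pos_approx[OF m] len pos F_def by simp
  then have "real j / F - 5 / F \<le> block_lower_lim (zeck m)" "block_lower_lim (zeck m) \<le> real j / F + 5 / F"
    by linarith+
  moreover have "5 / F < d / 4" "1 / F < d / 20" "z \<le> real j / F" "real j / F < z + 1 / F"
    using Fd F j by (simp_all add: field_simps)
  ultimately have "x < block_lower_lim (zeck m) \<and> block_lower_lim (zeck m) < y"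
    using assms(2) unfolding z_def d_def by argo
  then show ?thesis using that zeck_expansion[OF m] by blast
qed

definition block_seq :: "nat list \<Rightarrow> nat \<Rightarrow> nat" where
  "block_seq c k = (if 1 \<le> k \<and> k \<le> length c then c ! (k - 1) else 0)"

lemma block_seq_Fstar:
  assumes c: "zeck_block c"
  shows "block_seq c \<in> Fstar"
proof -
  have "\<forall>k\<ge>1. block_seq c k \<in> {0, 1}"
    using zeck_block_digit[OF c] unfolding block_seq_def
    by (auto simp: le_Suc_eq dest!: nth_mem[of "_ - 1" c])
  moreover have "\<forall>k\<ge>1. block_seq c k * block_seq c (Suc k) = 0"
  proof (intro allI impI)
    fix k :: nat assume k: "1 \<le> k"
    show "block_seq c k * block_seq c (Suc k) = 0"
    proof (cases "Suc k \<le> length c")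
      case True
      then have "Suc (k - 1) < length c" using k by simp
      then have "c ! (k - 1) * c ! Suc (k - 1) = 0"
        using c unfolding zeck_block_def zeck_word_iff by blast
      then show ?thesis unfolding block_seq_def using True k by simp
    qed (simp add: block_seq_def)
  qed
  moreover have "\<not> (\<exists>j\<ge>1. \<forall>i. block_seq c (j + i) = (if even i then 1 else 0))"
  proof
    assume "\<exists>j\<ge>1. \<forall>i. block_seq c (j + i) = (if even i then 1 else 0)"
    then obtain j where "1 \<le> j" "block_seq c (j + 2 * length c) = 1" by fastforce
    then show False unfolding block_seq_def by simp
  qed
  ultimately show ?thesis unfolding Fstar_def by blast
qed

lemma block_seq_1: "zeck_block c \<Longrightarrow> block_seq c 1 = 1"
  unfolding block_seq_def zeck_block_def by (cases c) auto

lemma length_restr [simp]: "length (restr \<mu> s) = s"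
  unfolding restr_def by simp

lemma nth_restr: "i < s \<Longrightarrow> restr \<mu> s ! i = \<mu> (Suc i)"
  unfolding restr_def by (subst nth_map_upt) auto

lemma restr_block_seq: "length c \<le> s \<Longrightarrow> restr (block_seq c) s = c @ replicate (s - length c) 0"
  by (rule nth_equalityI) (auto simp: nth_append nth_restr block_seq_def)

lemma dotF_block_seq: "dotF (block_seq c) = block_weight c"
proof -
  have "(\<Sum>k. real (block_seq c (Suc k)) * gomega ^ k) = (\<Sum>k<length c. real (block_seq c (Suc k)) * gomega ^ k)"
    by (rule suminf_finite) (auto simp: block_seq_def)
  also have "\<dots> = block_weight c" unfolding block_weight_def block_seq_def by (intro sum.cong) auto
  finally show ?thesis unfolding dotF_def .
qed

lemma zeck_block_restr:
  assumes "\<mu> \<in> Fstar" "\<mu> 1 = 1" "1 \<le> s"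
  shows "zeck_block (restr \<mu> s)"
proof -
  have "set (restr \<mu> s) \<subseteq> {0, 1}" "\<forall>i. Suc i < s \<longrightarrow> \<mu> (Suc i) * \<mu> (Suc (Suc i)) = 0"
    using assms(1) unfolding Fstar_def restr_def by auto
  then have "zeck_word (restr \<mu> s)" unfolding zeck_word_iff by (simp add: nth_restr)
  moreover have "restr \<mu> s \<noteq> []" using assms(3) by (auto simp flip: length_0_conv)
  moreover from this have "hd (restr \<mu> s) = 1"
    using assms(2,3) nth_restr[of 0 s \<mu>] by (simp add: hd_conv_nth)
  ultimately show ?thesis unfolding zeck_block_def by blast
qed

lemma block_upper_lim_restr_tendsto:
  assumes "\<mu> \<in> Fstar" "\<mu> 1 = 1"
  shows "(\<lambda>s. block_upper_lim (restr \<mu> s)) \<longlonglongrightarrow> gphi * (dotF \<mu> - 1)"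
proof -
  have digits: "\<mu> (Suc k) \<in> {0, 1}" for k using assms(1) unfolding Fstar_def by simp
  have "norm (real (\<mu> (Suc k)) * gomega ^ k) \<le> gomega ^ k" for k
    using digits[of k] gomega_pos by auto
  then have "summable (\<lambda>k. real (\<mu> (Suc k)) * gomega ^ k)"
    using gomega_pos gomega_less_1
    by (intro summable_comparison_test[OF _ summable_geometric[of gomega]]) auto
  moreover have "block_weight (restr \<mu> s) = (\<Sum>k<s. real (\<mu> (Suc k)) * gomega ^ k)" for s
    unfolding block_weight_def by (intro sum.cong) (simp_all add: nth_restr)
  ultimately have weight: "(\<lambda>s. block_weight (restr \<mu> s)) \<longlonglongrightarrow> dotF \<mu>"
    unfolding dotF_def by (simp add: summable_LIMSEQ)
  have "(\<lambda>s. gomega ^ (s - 1 + last (restr \<mu> s))) \<longlonglongrightarrow> 0"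
  proof (rule Lim_null_comparison)
    have "gomega ^ (s - 1 + last (restr \<mu> s)) \<le> gomega ^ (s - 1)" for s
      using gomega_pos gomega_less_1 by (intro power_decreasing) auto
    then show "\<forall>\<^sub>F s in sequentially. norm (gomega ^ (s - 1 + last (restr \<mu> s))) \<le> gomega ^ (s - 1)"
      using gomega_pos by simp
    show "(\<lambda>s. gomega ^ (s - 1)) \<longlonglongrightarrow> 0"
      by (rule LIMSEQ_offset[where k = 1])
        (use LIMSEQ_power_zero[of gomega] gomega_pos gomega_less_1 in simp)
  qed
  then have "(\<lambda>s. gphi * (block_weight (restr \<mu> s) + gomega ^ (s - 1 + last (restr \<mu> s)) - 1))
      \<longlonglongrightarrow> gphi * (dotF \<mu> + 0 - 1)"
    by (intro tendsto_intros weight)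
  then show ?thesis unfolding block_upper_lim_def by simp
qed

lemma block_lower_lim_less_upper_lim_append: "block_lower_lim c < block_upper_lim (c @ replicate j 0)"
  unfolding block_lower_lim_def block_upper_lim_def block_weight_append_replicate_0
  using gphi_gt_1 gomega_pos by simp

lemma block_upper_lim_restr_block_seq_tendsto:
  "zeck_block c \<Longrightarrow> (\<lambda>s. block_upper_lim (restr (block_seq c) s)) \<longlonglongrightarrow> block_lower_lim c"
  using block_upper_lim_restr_tendsto[OF block_seq_Fstar block_seq_1]
  unfolding dotF_block_seq block_lower_lim_def .

definition proportion :: "(nat \<Rightarrow> bool) \<Rightarrow> nat \<Rightarrow> real" where
  "proportion P n = real (card {k \<in> {1..n}. P k}) / real n"

lemma LB_prop_eq_proportion:
  "LB_prop K s Q = proportion (\<lambda>k. s \<le> length (zeck (K k)) \<and> Q (take s (zeck (K k))))"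
  unfolding LB_prop_def proportion_def ..

lemma proportion_cong: "(\<And>k. 1 \<le> k \<Longrightarrow> P k = Q k) \<Longrightarrow> proportion P = proportion Q"
  unfolding proportion_def by (intro ext arg_cong[where f = "\<lambda>A. real (card A) / _"]) auto

lemma proportion_False: "proportion (\<lambda>k. False) = (\<lambda>n. 0)"
  unfolding proportion_def by simp

lemma proportion_True_tendsto:
  assumes "\<And>k. P k"
  shows "proportion P \<longlonglongrightarrow> 1"
proof (rule tendsto_eventually, rule eventually_mono[OF eventually_ge_at_top[of 1]])
  fix n :: nat assume "1 \<le> n"
  moreover have "{k \<in> {1..n}. P k} = {1..n}" using assms by auto
  ultimately show "proportion P n = 1" unfolding proportion_def by simp
qed

lemma proportion_le_add:
  assumes "eventually (\<lambda>k. Q k \<longrightarrow> P k) sequentially"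
  obtains k0 :: nat where "\<And>n. proportion Q n \<le> proportion P n + real k0 / real n"
proof -
  obtain k0 where k0: "\<And>k. k \<ge> k0 \<Longrightarrow> Q k \<longrightarrow> P k"
    using assms unfolding eventually_sequentially by auto
  have "card {k \<in> {1..n}. Q k} \<le> card {k \<in> {1..n}. P k} + k0" for n
  proof -
    have "{k \<in> {1..n}. Q k} \<subseteq> {k \<in> {1..n}. P k} \<union> {..<k0}" using k0 not_le by blast
    then have "card {k \<in> {1..n}. Q k} \<le> card ({k \<in> {1..n}. P k} \<union> {..<k0})" by (intro card_mono) auto
    also have "\<dots> \<le> card {k \<in> {1..n}. P k} + k0" using card_Un_le[of _ "{..<k0}"] by simp
    finally show ?thesis .
  qed
  then have "proportion Q n \<le> proportion P n + real k0 / real n" for n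
    unfolding proportion_def add_divide_distrib[symmetric]
    by (intro divide_right_mono) (simp_all add: of_nat_add[symmetric] del: of_nat_add)
  then show ?thesis using that by blast
qed

lemma proportion_tendsto_squeeze:
  assumes "\<And>e. e > 0 \<Longrightarrow> \<exists>Q1 Q2 L1 L2. proportion Q1 \<longlonglongrightarrow> L1 \<and> L - e \<le> L1 \<and>
      proportion Q2 \<longlonglongrightarrow> L2 \<and> L2 \<le> L + e \<and>
      eventually (\<lambda>k. Q1 k \<longrightarrow> P k) sequentially \<and> eventually (\<lambda>k. P k \<longrightarrow> Q2 k) sequentially"
  shows "proportion P \<longlonglongrightarrow> L"
  unfolding tendsto_iff
proof (intro allI impI)
  fix r :: real assume "r > 0"
  define e where "e = r / 3"
  have "e > 0" using \<open>r > 0\<close> e_def by simp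
  then obtain Q1 Q2 L1 L2 where Q: "proportion Q1 \<longlonglongrightarrow> L1" "L - e \<le> L1"
    "proportion Q2 \<longlonglongrightarrow> L2" "L2 \<le> L + e"
    "eventually (\<lambda>k. Q1 k \<longrightarrow> P k) sequentially" "eventually (\<lambda>k. P k \<longrightarrow> Q2 k) sequentially"
    using assms by blast
  obtain k1 where k1: "\<And>n. proportion Q1 n \<le> proportion P n + real k1 / real n"
    using proportion_le_add[OF Q(5)] by blast
  obtain k2 where k2: "\<And>n. proportion P n \<le> proportion Q2 n + real k2 / real n"
    using proportion_le_add[OF Q(6)] by blast
  have ev: "eventually (\<lambda>n. dist (f n) l < e) sequentially"
    if "f \<longlonglongrightarrow> l" for f :: "nat \<Rightarrow> real" and l
    using that \<open>e > 0\<close> tendsto_iff by blast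
  note ev[OF Q(1)] ev[OF Q(3)] ev[OF lim_const_over_n[of "real k1"]] ev[OF lim_const_over_n[of "real k2"]]
  then show "eventually (\<lambda>n. dist (proportion P n) L < r) sequentially"
  proof eventually_elim
    case (elim n)
    then show ?case using k1[of n] k2[of n] Q(2,4) e_def unfolding dist_real_def abs_less_iff by linarith
  qed
qed

lemma proportion_eventually_cong:
  assumes "eventually (\<lambda>k. P k \<longleftrightarrow> Q k) sequentially" "proportion Q \<longlonglongrightarrow> L"
  shows "proportion P \<longlonglongrightarrow> L"
proof (rule proportion_tendsto_squeeze)
  fix e :: real assume "e > 0"
  then show "\<exists>Q1 Q2 L1 L2. proportion Q1 \<longlonglongrightarrow> L1 \<and> L - e \<le> L1 \<and> proportion Q2 \<longlonglongrightarrow> L2 \<and> L2 \<le> L + e \<and>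
      eventually (\<lambda>k. Q1 k \<longrightarrow> P k) sequentially \<and> eventually (\<lambda>k. P k \<longrightarrow> Q2 k) sequentially"
    using assms by (intro exI[of _ Q] exI[of _ L]) (auto elim: eventually_mono)
qed

lemma proportion_diff:
  assumes "\<And>k. Q k \<Longrightarrow> R k"
  shows "proportion (\<lambda>k. R k \<and> \<not> Q k) n = proportion R n - proportion Q n"
proof -
  have "{k \<in> {1..n}. R k} = {k \<in> {1..n}. Q k} \<union> {k \<in> {1..n}. R k \<and> \<not> Q k}" using assms by auto
  then have "card {k \<in> {1..n}. R k} = card {k \<in> {1..n}. Q k} + card {k \<in> {1..n}. R k \<and> \<not> Q k}"
    by (simp add: card_Un_disjoint disjoint_iff)
  then show ?thesis unfolding proportion_def by (simp add: add_divide_distrib)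
qed

definition has_limit_distribution :: "(nat \<Rightarrow> real) \<Rightarrow> (real \<Rightarrow> real) \<Rightarrow> bool" where
  "has_limit_distribution x g \<longleftrightarrow> (\<forall>y\<in>{0..1}. proportion (\<lambda>k. x k \<le> y) \<longlonglongrightarrow> g y)"

lemma equidistributed_iff_has_limit_distribution:
  "equidistributed x \<longleftrightarrow> has_limit_distribution (\<lambda>k. frac (x k)) (\<lambda>y. y)"
  unfolding equidistributed_def has_limit_distribution_def proportion_def ..

lemma clamp_01_real: "clamp (0::real) 1 y = max 0 (min 1 y)"
  unfolding clamp_def Basis_real_def by auto

lemma has_limit_distribution_clamp:
  assumes x: "\<forall>k\<ge>1. x k \<in> {0..<1}" and g: "has_limit_distribution x g" "g 0 = 0" "g 1 = 1"
  shows "proportion (\<lambda>k. x k \<le> y) \<longlonglongrightarrow> g (clamp 0 1 y)"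
proof -
  consider "y < 0" | "1 \<le> y" | "y \<in> {0..1}" by fastforce
  then show ?thesis
  proof cases
    case 1
    then have "proportion (\<lambda>k. x k \<le> y) = proportion (\<lambda>k. False)"
      using x by (intro proportion_cong) (auto simp: not_le intro: less_le_trans)
    then show ?thesis using 1 g(2) by (simp add: proportion_False clamp_01_real)
  next
    case 2
    then have "proportion (\<lambda>k. x k \<le> y) = proportion (\<lambda>k. True)"
      using x by (intro proportion_cong) (auto intro: less_imp_le less_le_trans)
    then show ?thesis using 2 g(3) proportion_True_tendsto by (simp add: clamp_01_real)
  next
    case 3
    then show ?thesis using g(1) unfolding has_limit_distribution_def by (simp add: clamp_01_real)
  qed
qed

lemma proportion_less_tendsto:
  fixes x B :: "nat \<Rightarrow> real"
  assumes dist: "\<And>y. proportion (\<lambda>k. x k \<le> y) \<longlonglongrightarrow> G y" and cont: "isCont G \<beta>" and B: "B \<longlonglongrightarrow> \<beta>"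
  shows "proportion (\<lambda>k. x k < B k) \<longlonglongrightarrow> G \<beta>"
proof (rule proportion_tendsto_squeeze)
  fix e :: real assume "e > 0"
  then obtain d where "d > 0" and d: "\<And>y. \<bar>y - \<beta>\<bar> < d \<Longrightarrow> \<bar>G y - G \<beta>\<bar> < e"
    using cont unfolding continuous_at_eps_delta dist_real_def by blast
  define \<delta> where "\<delta> = d / 2"
  have "0 < \<delta>" "\<delta> < d" using \<open>d > 0\<close> \<delta>_def by simp_all
  have "eventually (\<lambda>k. dist (B k) \<beta> < \<delta>) sequentially" using B \<open>0 < \<delta>\<close> tendsto_iff by blast
  then have ev: "eventually (\<lambda>k. \<beta> - \<delta> < B k \<and> B k < \<beta> + \<delta>) sequentially"
    by (rule eventually_mono) (auto simp: dist_real_def abs_less_iff)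
  show "\<exists>Q1 Q2 L1 L2. proportion Q1 \<longlonglongrightarrow> L1 \<and> G \<beta> - e \<le> L1 \<and> proportion Q2 \<longlonglongrightarrow> L2 \<and> L2 \<le> G \<beta> + e \<and>
      eventually (\<lambda>k. Q1 k \<longrightarrow> x k < B k) sequentially \<and> eventually (\<lambda>k. x k < B k \<longrightarrow> Q2 k) sequentially"
  proof (intro exI conjI)
    show "proportion (\<lambda>k. x k \<le> \<beta> - \<delta>) \<longlonglongrightarrow> G (\<beta> - \<delta>)" "proportion (\<lambda>k. x k \<le> \<beta> + \<delta>) \<longlonglongrightarrow> G (\<beta> + \<delta>)"
      by (rule dist)+
    show "G \<beta> - e \<le> G (\<beta> - \<delta>)" "G (\<beta> + \<delta>) \<le> G \<beta> + e"
      using d[of "\<beta> - \<delta>"] d[of "\<beta> + \<delta>"] \<open>0 < \<delta>\<close> \<open>\<delta> < d\<close> by (auto simp: abs_less_iff)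
    show "eventually (\<lambda>k. x k \<le> \<beta> - \<delta> \<longrightarrow> x k < B k) sequentially"
      "eventually (\<lambda>k. x k < B k \<longrightarrow> x k \<le> \<beta> + \<delta>) sequentially"
      using ev by (auto elim!: eventually_mono)
  qed
qed

lemma proportion_between_tendsto:
  fixes x A B :: "nat \<Rightarrow> real"
  assumes dist: "\<And>y. proportion (\<lambda>k. x k \<le> y) \<longlonglongrightarrow> G y" and "isCont G \<alpha>" "isCont G \<beta>"
    and "A \<longlonglongrightarrow> \<alpha>" "B \<longlonglongrightarrow> \<beta>" and "\<And>k. A k \<le> B k"
  shows "proportion (\<lambda>k. A k \<le> x k \<and> x k < B k) \<longlonglongrightarrow> G \<beta> - G \<alpha>"
proof -
  have "proportion (\<lambda>k. A k \<le> x k \<and> x k < B k)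
      = (\<lambda>n. proportion (\<lambda>k. x k < B k) n - proportion (\<lambda>k. x k < A k) n)"
  proof
    fix n
    have "proportion (\<lambda>k. x k < B k \<and> \<not> x k < A k) n = proportion (\<lambda>k. x k < B k) n - proportion (\<lambda>k. x k < A k) n"
      using assms(6) by (intro proportion_diff) (meson less_le_trans)
    then show "proportion (\<lambda>k. A k \<le> x k \<and> x k < B k) n = proportion (\<lambda>k. x k < B k) n - proportion (\<lambda>k. x k < A k) n"
      by (simp add: not_less conj_commute)
  qed
  then show ?thesis using assms by (simp add: tendsto_diff proportion_less_tendsto)
qed

lemma proportion_le_tendsto_perturb:
  fixes x t :: "nat \<Rightarrow> real"
  assumes dist: "\<And>y. proportion (\<lambda>k. x k \<le> y) \<longlonglongrightarrow> G y" and cont: "isCont G y"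
    and close: "(\<lambda>k. t k - x k) \<longlonglongrightarrow> 0"
  shows "proportion (\<lambda>k. t k \<le> y) \<longlonglongrightarrow> G y"
proof (rule proportion_tendsto_squeeze)
  fix e :: real assume "e > 0"
  then obtain d where "d > 0" and d: "\<And>z. \<bar>z - y\<bar> < d \<Longrightarrow> \<bar>G z - G y\<bar> < e"
    using cont unfolding continuous_at_eps_delta dist_real_def by blast
  define \<delta> where "\<delta> = d / 2"
  have "0 < \<delta>" "\<delta> < d" using \<open>d > 0\<close> \<delta>_def by simp_all
  have "eventually (\<lambda>k. dist (t k - x k) 0 < \<delta>) sequentially"
    using tendsto_iff[THEN iffD1, OF close, rule_format, OF \<open>0 < \<delta>\<close>] .
  then have ev: "eventually (\<lambda>k. x k - \<delta> < t k \<and> t k < x k + \<delta>) sequentially"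
    by (rule eventually_mono) (auto simp: dist_real_def abs_less_iff)
  show "\<exists>Q1 Q2 L1 L2. proportion Q1 \<longlonglongrightarrow> L1 \<and> G y - e \<le> L1 \<and> proportion Q2 \<longlonglongrightarrow> L2 \<and> L2 \<le> G y + e \<and>
      eventually (\<lambda>k. Q1 k \<longrightarrow> t k \<le> y) sequentially \<and> eventually (\<lambda>k. t k \<le> y \<longrightarrow> Q2 k) sequentially"
  proof (intro exI conjI)
    show "proportion (\<lambda>k. x k \<le> y - \<delta>) \<longlonglongrightarrow> G (y - \<delta>)" "proportion (\<lambda>k. x k \<le> y + \<delta>) \<longlonglongrightarrow> G (y + \<delta>)"
      by (rule dist)+
    show "G y - e \<le> G (y - \<delta>)" "G (y + \<delta>) \<le> G y + e"
      using d[of "y - \<delta>"] d[of "y + \<delta>"] \<open>0 < \<delta>\<close> \<open>\<delta> < d\<close> by (auto simp: abs_less_iff)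
    show "eventually (\<lambda>k. x k \<le> y - \<delta> \<longrightarrow> t k \<le> y) sequentially"
      "eventually (\<lambda>k. t k \<le> y \<longrightarrow> x k \<le> y + \<delta>) sequentially"
      using ev by (auto elim!: eventually_mono)
  qed
qed

definition unit_homeo :: "(real \<Rightarrow> real) \<Rightarrow> bool" where
  "unit_homeo h \<longleftrightarrow> continuous_on {0..1} h \<and> strict_mono_on {0..1} h \<and> h 0 = 0 \<and> h 1 = 1"

text \<open>Clamping makes the inverse a continuous function on all of \<open>\<real>\<close>, as a distribution
  function should be.\<close>

definition unit_inv :: "(real \<Rightarrow> real) \<Rightarrow> real \<Rightarrow> real" where
  "unit_inv h y = the_inv_into {0..1} h (clamp 0 1 y)"

context
  fixes h :: "real \<Rightarrow> real"
  assumes h: "unit_homeo h"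
begin

lemma unit_homeo_le_iff: "p \<in> {0..1} \<Longrightarrow> q \<in> {0..1} \<Longrightarrow> h p \<le> h q \<longleftrightarrow> p \<le> q"
  using h unfolding unit_homeo_def by (meson linorder_not_le strict_mono_onD strict_mono_on_leD)

lemma unit_homeo_range: "p \<in> {0..1} \<Longrightarrow> h p \<in> {0..1}"
  using unit_homeo_le_iff[of 0 p] unit_homeo_le_iff[of p 1] h unfolding unit_homeo_def by auto

lemma unit_homeo_image: "h ` {0..1} = {0..1}"
proof
  show "h ` {0..1} \<subseteq> {0..1}" using unit_homeo_range by auto
  show "{0..1} \<subseteq> h ` {0..1}"
  proof
    fix y :: real assume "y \<in> {0..1}"
    then obtain p where "0 \<le> p" "p \<le> 1" "h p = y"
      using IVT'[of h 0 y 1] h unfolding unit_homeo_def by auto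
    then show "y \<in> h ` {0..1}" by force
  qed
qed

lemma inj_on_unit_homeo: "inj_on h {0..1}"
  using h strict_mono_on_imp_inj_on unfolding unit_homeo_def by blast

lemma unit_inv_range: "unit_inv h y \<in> {0..1}"
  unfolding unit_inv_def
  by (rule the_inv_into_into[OF inj_on_unit_homeo]) (auto simp: unit_homeo_image clamp_01_real)

lemma unit_homeo_unit_inv_eq: "h (unit_inv h y) = clamp 0 1 y"
  unfolding unit_inv_def
  by (rule f_the_inv_into_f[OF inj_on_unit_homeo]) (auto simp: unit_homeo_image clamp_01_real)

lemma unit_inv_unit_homeo_eq: "p \<in> {0..1} \<Longrightarrow> unit_inv h (h p) = p"
  unfolding unit_inv_def using unit_homeo_range[of p] the_inv_into_f_f[OF inj_on_unit_homeo]
  by (simp add: clamp_01_real)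

lemma unit_inv_le_iff:
  assumes "y \<in> {0..1}" "y' \<in> {0..1}"
  shows "unit_inv h y \<le> unit_inv h y' \<longleftrightarrow> y \<le> y'"
proof -
  have "clamp 0 1 y = y" "clamp 0 1 y' = y'" using assms by (auto simp: clamp_01_real)
  then show ?thesis
    using unit_homeo_le_iff[OF unit_inv_range unit_inv_range, of y y'] unit_homeo_unit_inv_eq by simp
qed

lemma le_unit_inv:
  assumes "p \<in> {0..1}" "h p \<le> y"
  shows "p \<le> unit_inv h y"
proof -
  have "h p \<le> clamp 0 1 y" using assms unit_homeo_range[of p] by (simp add: clamp_01_real)
  then show ?thesis using unit_homeo_le_iff[OF assms(1) unit_inv_range] unit_homeo_unit_inv_eq by simp
qed

lemma unit_homeo_le_iff_le_unit_inv:
  assumes "p \<in> {0..1}" "0 \<le> y"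
  shows "h p \<le> y \<longleftrightarrow> p \<le> unit_inv h y"
proof
  assume "p \<le> unit_inv h y"
  then have "h p \<le> h (unit_inv h y)" using unit_homeo_le_iff[OF assms(1) unit_inv_range] by simp
  then show "h p \<le> y" using unit_homeo_unit_inv_eq assms(2) by (simp add: clamp_01_real)
qed (rule le_unit_inv[OF assms(1)])

lemma unit_inv_nonpos: "y \<le> 0 \<Longrightarrow> unit_inv h y = 0"
  using unit_inv_unit_homeo_eq[of 0] h unfolding unit_inv_def unit_homeo_def by (simp add: clamp_01_real)

lemma isCont_unit_inv: "isCont (unit_inv h) y"
proof -
  have "continuous_on (h ` {0..1}) (the_inv_into {0..1} h)"
    using continuous_on_inv_into[OF _ compact_Icc inj_on_unit_homeo] h unfolding unit_homeo_def by blast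
  then show ?thesis
    unfolding unit_inv_def unit_homeo_image by (intro clamp_continuous_at) simp
qed

lemma unit_homeo_unit_inv: "unit_homeo (unit_inv h)"
  unfolding unit_homeo_def
proof (intro conjI)
  show "continuous_on {0..1} (unit_inv h)" using isCont_unit_inv by (simp add: continuous_at_imp_continuous_on)
  show "strict_mono_on {0..1} (unit_inv h)" using unit_inv_le_iff by (intro strict_mono_onI) (meson not_le)
  show "unit_inv h 0 = 0" "unit_inv h 1 = 1" using unit_inv_unit_homeo_eq[of 0] unit_inv_unit_homeo_eq[of 1] h
    unfolding unit_homeo_def by auto
qed

end

lemma proportion_unit_homeo_le_tendsto:
  assumes h: "unit_homeo h" and p: "\<And>k. p k \<in> {0..1}"
    and dist: "\<And>y. proportion (\<lambda>k. p k \<le> y) \<longlonglongrightarrow> clamp 0 1 y"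
  shows "proportion (\<lambda>k. h (p k) \<le> z) \<longlonglongrightarrow> unit_inv h z"
proof (cases "z < 0")
  case True
  then have "proportion (\<lambda>k. h (p k) \<le> z) = proportion (\<lambda>k. False)"
    using unit_homeo_range[OF h p] by (intro proportion_cong) (auto simp: not_le intro: less_le_trans)
  then show ?thesis using unit_inv_nonpos[OF h] True by (simp add: proportion_False)
next
  case False
  then have "(\<lambda>k. h (p k) \<le> z) = (\<lambda>k. p k \<le> unit_inv h z)"
    using unit_homeo_le_iff_le_unit_inv[OF h p] by simp
  then show ?thesis using dist[of "unit_inv h z"] unit_inv_range[OF h, of z] by (simp add: clamp_01_real)
qed

section \<open>Uniform continuations\<close>

definition continuation_ratio :: "(real \<Rightarrow> real) \<Rightarrow> nat \<Rightarrow> real \<Rightarrow> real" where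
  "continuation_ratio f n p = (f (real n + p) - f (real n)) / (f (real n + 1) - f (real n))"

lemma frac_of_nat_add: "0 \<le> p \<Longrightarrow> p < 1 \<Longrightarrow> frac (real n + p) = p"
proof -
  assume "0 \<le> p" "p < 1"
  then have "\<lfloor>real n + p\<rfloor> = int n" by (intro floor_unique) auto
  then show ?thesis unfolding frac_def by simp
qed

lemma uniform_continuation_FF: "uniform_continuation f \<Longrightarrow> 1 \<le> n \<Longrightarrow> f (real n) = real (FF n)"
  unfolding uniform_continuation_def by auto

lemma uniform_continuation_limit:
  assumes f: "uniform_continuation f"
  obtains h where "uniform_limit {0..1} (continuation_ratio f) h sequentially" "unit_homeo h"
proof -
  obtain h where h: "uniform_limit {0..1} (continuation_ratio f) h sequentially"
    "strict_mono_on {0..1} h" "continuous_on {0..1} h"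
    using f unfolding uniform_continuation_def continuation_ratio_def[abs_def] by blast
  have "(\<lambda>n. continuation_ratio f n 0) \<longlonglongrightarrow> h 0"
    using tendsto_uniform_limitI[OF h(1), of 0] by simp
  moreover have "(\<lambda>n. continuation_ratio f n 0) = (\<lambda>n. 0)" unfolding continuation_ratio_def by simp
  ultimately have "h 0 = 0" using LIMSEQ_unique tendsto_const by metis
  have "eventually (\<lambda>n. continuation_ratio f n 1 = 1) sequentially"
    using eventually_ge_at_top[of 1]
  proof (rule eventually_mono)
    fix n :: nat assume n: "1 \<le> n"
    have "f (real n) = real (FF n)" "f (real n + 1) = real (FF (Suc n))"
      using uniform_continuation_FF[OF f n] uniform_continuation_FF[OF f, of "Suc n"] by (auto simp: add.commute)
    then show "continuation_ratio f n 1 = 1"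
      unfolding continuation_ratio_def using FF_less_Suc[OF n] by simp
  qed
  then have "(\<lambda>n. continuation_ratio f n 1) \<longlonglongrightarrow> 1" by (rule tendsto_eventually)
  then have "h 1 = 1" using tendsto_uniform_limitI[OF h(1), of 1] LIMSEQ_unique by auto
  then show ?thesis using that h \<open>h 0 = 0\<close> unfolding unit_homeo_def by blast
qed

lemma zeck_pos_eq_continuation_ratio:
  assumes f: "uniform_continuation f" and m: "0 < m"
  shows "zeck_pos m = continuation_ratio f (length (zeck m)) (frac (the_inv_into {1..} f (real m)))"
proof -
  define N where "N = length (zeck m)"
  have N: "1 \<le> N" "FF N \<le> m" "m < FF (Suc N)" using length_zeck_bounds[OF m] N_def by auto
  have fN: "f (real N) = real (FF N)" "f (real N + 1) = real (FF (Suc N))"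
    using uniform_continuation_FF[OF f N(1)] uniform_continuation_FF[OF f, of "Suc N"] by (auto simp: add.commute)
  have "continuous_on {real N..real N + 1} f"
    using f N(1) unfolding uniform_continuation_def by (auto elim: continuous_on_subset)
  then obtain x where x: "real N \<le> x" "x \<le> real N + 1" "f x = real m"
    using IVT'[of f "real N" "real m" "real N + 1"] fN N by auto
  define q where "q = x - real N"
  have q: "0 \<le> q" "q \<le> 1" "f (real N + q) = real m" using x q_def by auto
  have "q \<noteq> 1" using q fN N by auto
  then have "frac (real N + q) = q" using q frac_of_nat_add by simp
  moreover have "the_inv_into {1..} f (real m) = real N + q"
    using f q N(1) unfolding uniform_continuation_def
    by (intro the_inv_into_f_eq strict_mono_on_imp_inj_on) auto
  moreover have "continuation_ratio f N q = zeck_pos m"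
    unfolding continuation_ratio_def zeck_pos_def N_def[symmetric] q(3) fN FF_Suc_pred[OF N(1)] by simp
  ultimately show ?thesis using N_def by simp
qed

definition fib_continuation :: "(real \<Rightarrow> real) \<Rightarrow> real \<Rightarrow> real" where
  "fib_continuation h x = real (FF (nat \<lfloor>x\<rfloor>)) + real (FF (nat \<lfloor>x\<rfloor> - 1)) * h (frac x)"

lemma nat_floor_add_frac: "0 \<le> x \<Longrightarrow> real (nat \<lfloor>x\<rfloor>) + frac x = x"
  by (simp add: frac_def)

context
  fixes h :: "real \<Rightarrow> real"
  assumes h: "unit_homeo h"
begin

lemma fib_continuation_nat_add:
  assumes "1 \<le> n" "p \<in> {0..1}"
  shows "fib_continuation h (real n + p) = real (FF n) + real (FF (n - 1)) * h p"
proof (cases "p < 1")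
  case True
  then have "\<lfloor>real n + p\<rfloor> = int n" using assms(2) by (intro floor_unique) auto
  then show ?thesis unfolding fib_continuation_def using frac_of_nat_add[of p n] assms(2) True by simp
next
  case False
  then have "p = 1" using assms(2) by simp
  have "frac (real (Suc n)) = 0" by simp
  then have "fib_continuation h (real (Suc n)) = real (FF (Suc n)) + real (FF n) * h 0"
    unfolding fib_continuation_def floor_of_nat nat_int diff_Suc_1 by (simp only:)
  moreover have "real n + p = real (Suc n)" using \<open>p = 1\<close> by simp
  ultimately show ?thesis using h \<open>p = 1\<close> FF_Suc_pred[OF assms(1)] by (simp add: unit_homeo_def add.commute)
qed

lemma fib_continuation_nat: "1 \<le> n \<Longrightarrow> fib_continuation h (real n) = real (FF n)"
  using fib_continuation_nat_add[of n 0] h by (simp add: unit_homeo_def)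

lemma strict_mono_on_fib_continuation: "strict_mono_on {1..} (fib_continuation h)"
proof (rule strict_mono_onI)
  fix x y :: real assume "x \<in> {1..}" "y \<in> {1..}" "x < y"
  define n m where "n = nat \<lfloor>x\<rfloor>" and "m = nat \<lfloor>y\<rfloor>"
  have nm: "1 \<le> n" "1 \<le> m"
    using \<open>x \<in> {1..}\<close> \<open>y \<in> {1..}\<close> unfolding n_def m_def by (simp_all add: le_nat_iff le_floor_iff)
  have "n \<le> m" using \<open>x < y\<close> unfolding n_def m_def by (simp add: floor_mono nat_mono)
  have "real n + frac x = x" "real m + frac y = y"
    using \<open>x \<in> {1..}\<close> \<open>y \<in> {1..}\<close> nat_floor_add_frac unfolding n_def m_def by auto
  have fr: "frac x \<in> {0..1}" "frac y \<in> {0..1}" using frac_ge_0 frac_lt_1 less_imp_le by auto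
  have fx: "fib_continuation h x = real (FF n) + real (FF (n - 1)) * h (frac x)"
    and fy: "fib_continuation h y = real (FF m) + real (FF (m - 1)) * h (frac y)"
    using fib_continuation_nat_add[OF nm(1) fr(1)] fib_continuation_nat_add[OF nm(2) fr(2)]
      \<open>real n + frac x = x\<close> \<open>real m + frac y = y\<close> by simp_all
  show "fib_continuation h x < fib_continuation h y"
  proof (cases "n = m")
    case True
    then have "frac x < frac y" using \<open>real n + frac x = x\<close> \<open>real m + frac y = y\<close> \<open>x < y\<close> by simp
    then have "h (frac x) < h (frac y)"
      using h fr unfolding unit_homeo_def by (auto intro: strict_mono_onD)
    then show ?thesis using fx fy True FF_pos[of "n - 1"] by simp
  next
    case False
    have "h (frac x) < 1"
      using unit_homeo_le_iff[OF h, of 1 "frac x"] h fr frac_lt_1[of x] unfolding unit_homeo_def by auto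
    then have "fib_continuation h x < real (FF (Suc n))"
      using fx FF_Suc_pred[OF nm(1)] FF_pos[of "n - 1"] by simp
    also have "\<dots> \<le> real (FF m)" using FF_mono[of "Suc n" m] \<open>n \<le> m\<close> False by simp
    also have "\<dots> \<le> fib_continuation h y" using fy unit_homeo_range[OF h, of "frac y"] fr by simp
    finally show ?thesis .
  qed
qed

lemma continuous_on_fib_continuation: "continuous_on {1..} (fib_continuation h)"
proof -
  have piece: "continuous_on {real n..real n + 1} (fib_continuation h)" if "1 \<le> n" for n
  proof -
    have "continuous_on {0..1} h" using h unfolding unit_homeo_def by blast
    then have "continuous_on {real n..real n + 1} (\<lambda>x. h (x - real n))"
      by (rule continuous_on_compose2) (auto intro: continuous_intros)
    then have "continuous_on {real n..real n + 1} (\<lambda>x. real (FF n) + real (FF (n - 1)) * h (x - real n))"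
      by (intro continuous_intros)
    moreover have "real (FF n) + real (FF (n - 1)) * h (x - real n) = fib_continuation h x"
      if "x \<in> {real n..real n + 1}" for x
      using fib_continuation_nat_add[OF \<open>1 \<le> n\<close>, of "x - real n"] that by simp
    ultimately show ?thesis by (rule continuous_on_eq)
  qed
  have upto: "continuous_on {1..real (Suc M)} (fib_continuation h)" for M
  proof (induction M)
    case 0
    then show ?case using piece[of 1] by simp
  next
    case (Suc M)
    have "{1..real (Suc (Suc M))} = {1..real (Suc M)} \<union> {real (Suc M)..real (Suc M) + 1}" by auto
    then show ?case using continuous_on_closed_Un[OF _ _ Suc piece[of "Suc M"]] by simp
  qed
  show ?thesis unfolding continuous_on_eq_continuous_within
  proof
    fix x :: real assume "x \<in> {1..}"
    define M where "M = nat \<lceil>x\<rceil>"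
    have "x < real (Suc M)" using M_def by linarith
    then have "at x within {1..} = at x within {1..real (Suc M)}"
      by (intro at_within_nhd[of x "{..<real (Suc M)}"]) auto
    then show "continuous (at x within {1..}) (fib_continuation h)"
      using upto[of M] \<open>x \<in> {1..}\<close> \<open>x < real (Suc M)\<close>
      unfolding continuous_on_eq_continuous_within by auto
  qed
qed

lemma continuation_ratio_fib_continuation:
  "1 \<le> n \<Longrightarrow> p \<in> {0..1} \<Longrightarrow> continuation_ratio (fib_continuation h) n p = h p"
  unfolding continuation_ratio_def
  using fib_continuation_nat_add[of n p] fib_continuation_nat_add[of n 1] fib_continuation_nat[of n] h
  by (simp add: unit_homeo_def)

lemma uniform_continuation_fib_continuation: "uniform_continuation (fib_continuation h)"
proof -
  have "uniform_limit {0..1} (continuation_ratio (fib_continuation h)) h sequentially"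
    unfolding uniform_limit_iff
  proof (intro allI impI)
    fix e :: real assume "e > 0"
    show "\<forall>\<^sub>F n in sequentially. \<forall>p\<in>{0..1}. dist (continuation_ratio (fib_continuation h) n p) (h p) < e"
      using eventually_ge_at_top[of 1]
      by (rule eventually_mono) (auto simp: continuation_ratio_fib_continuation \<open>e > 0\<close>)
  qed
  then show ?thesis
    using strict_mono_on_fib_continuation continuous_on_fib_continuation fib_continuation_nat h
    unfolding uniform_continuation_def continuation_ratio_def[abs_def] unit_homeo_def by blast
qed

end

lemma frac_the_inv_into_fib_continuation:
  assumes g: "unit_homeo g" and m: "0 < m"
  shows "frac (the_inv_into {1..} (fib_continuation (unit_inv g)) (real m)) = g (zeck_pos m)"
proof -
  define N where "N = length (zeck m)"
  define q where "q = g (zeck_pos m)"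
  have h: "unit_homeo (unit_inv g)" by (rule unit_homeo_unit_inv[OF g])
  have N: "1 \<le> N" using length_zeck_bounds[OF m] N_def by simp
  have t: "zeck_pos m \<in> {0..<1}" using zeck_pos_range[OF m] by simp
  then have "q < 1" "0 \<le> q"
    using unit_homeo_le_iff[OF g, of 1 "zeck_pos m"] unit_homeo_range[OF g, of "zeck_pos m"] g
    unfolding q_def unit_homeo_def by auto
  have "unit_inv g q = zeck_pos m" using unit_inv_unit_homeo_eq[OF g] t q_def by simp
  then have "fib_continuation (unit_inv g) (real N + q) = real (FF N) + real (FF (N - 1)) * zeck_pos m"
    using fib_continuation_nat_add[OF h N, of q] \<open>0 \<le> q\<close> \<open>q < 1\<close> by simp
  also have "\<dots> = real m" unfolding zeck_pos_def N_def[symmetric] by simp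
  finally have "the_inv_into {1..} (fib_continuation (unit_inv g)) (real m) = real N + q"
    using N \<open>0 \<le> q\<close> strict_mono_on_fib_continuation[OF h]
    by (intro the_inv_into_f_eq strict_mono_on_imp_inj_on) auto
  then show ?thesis using frac_of_nat_add \<open>0 \<le> q\<close> \<open>q < 1\<close> q_def by simp
qed

locale zeck_sequence =
  fixes K :: "nat \<Rightarrow> nat"
  assumes pos: "\<forall>k\<ge>1. 0 < K k"
    and at_top: "filterlim K at_top sequentially"
begin

lemma length_zeck_at_top: "filterlim (\<lambda>k. length (zeck (K k))) at_top sequentially"
  unfolding filterlim_at_top
proof
  fix M :: nat
  have "eventually (\<lambda>k. FF M \<le> K k \<and> 1 \<le> k) sequentially"
    using at_top eventually_ge_at_top[of 1] unfolding filterlim_at_top by (auto intro: eventually_conj)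
  then show "eventually (\<lambda>k. M \<le> length (zeck (K k))) sequentially"
  proof (rule eventually_mono)
    fix k assume k: "FF M \<le> K k \<and> 1 \<le> k"
    then have "K k < FF (Suc (length (zeck (K k))))" using length_zeck_bounds pos by auto
    show "M \<le> length (zeck (K k))"
    proof (rule ccontr)
      assume "\<not> M \<le> length (zeck (K k))"
      then have "FF (Suc (length (zeck (K k)))) \<le> FF M" by (intro FF_mono) simp
      then show False using k \<open>K k < FF (Suc (length (zeck (K k))))\<close> by linarith
    qed
  qed
qed

lemma eventually_length_zeck_gt: "eventually (\<lambda>k. 1 \<le> k \<and> s < length (zeck (K k))) sequentially"
proof -
  have "eventually (\<lambda>k. Suc s \<le> length (zeck (K k))) sequentially"
    using length_zeck_at_top unfolding filterlim_at_top by blast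
  then show ?thesis using eventually_ge_at_top[of 1] by eventually_elim auto
qed

lemma zeck_pos_K_range: "1 \<le> k \<Longrightarrow> zeck_pos (K k) \<in> {0..<1}"
  using zeck_pos_range pos by auto

lemma eventually_take_zeck_eq_iff:
  assumes "zeck_block c"
  shows "eventually (\<lambda>k. (length c \<le> length (zeck (K k)) \<and> take (length c) (zeck (K k)) = c) \<longleftrightarrow>
    block_lower c (length (zeck (K k))) \<le> zeck_pos (K k) \<and> zeck_pos (K k) < block_upper c (length (zeck (K k)))) sequentially"
  using eventually_length_zeck_gt[of "length c"]
  by (rule eventually_mono) (use take_zeck_eq_iff_zeck_pos[OF assms] pos in auto)

lemma eventually_lex_le_take_zeck_iff:
  assumes "zeck_block c"
  shows "eventually (\<lambda>k. (length c \<le> length (zeck (K k)) \<and> lex_le (take (length c) (zeck (K k))) c) \<longleftrightarrow>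
    zeck_pos (K k) < block_upper c (length (zeck (K k)))) sequentially"
  using eventually_length_zeck_gt[of "length c"]
  by (rule eventually_mono) (use lex_le_take_zeck_iff_zeck_pos[OF assms] pos in auto)

lemma block_lower_K_tendsto:
  "zeck_block c \<Longrightarrow> (\<lambda>k. block_lower c (length (zeck (K k)))) \<longlonglongrightarrow> block_lower_lim c"
  using filterlim_compose[OF block_lower_tendsto length_zeck_at_top] .

lemma block_upper_K_tendsto:
  "zeck_block c \<Longrightarrow> (\<lambda>k. block_upper c (length (zeck (K k)))) \<longlonglongrightarrow> block_upper_lim c"
  using filterlim_compose[OF block_upper_tendsto length_zeck_at_top] .

section \<open>Equidistribution and the distribution of the normalized positions\<close>

text \<open>The ratio is evaluated at a point that moves with k, which is why the convergence
  to h has to be uniform.\<close>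

lemma zeck_pos_minus_limit_tendsto:
  assumes f: "uniform_continuation f" and h: "uniform_limit {0..1} (continuation_ratio f) h sequentially"
  shows "(\<lambda>k. zeck_pos (K k) - h (frac (the_inv_into {1..} f (real (K k))))) \<longlonglongrightarrow> 0"
  unfolding tendsto_iff
proof (intro allI impI)
  fix e :: real assume "e > 0"
  then have "eventually (\<lambda>n. \<forall>p\<in>{0..1}. dist (continuation_ratio f n p) (h p) < e) sequentially"
    using h unfolding uniform_limit_iff by blast
  then have "eventually (\<lambda>k. \<forall>p\<in>{0..1}. dist (continuation_ratio f (length (zeck (K k))) p) (h p) < e) sequentially"
    using length_zeck_at_top unfolding filterlim_iff by blast
  then show "eventually (\<lambda>k. dist (zeck_pos (K k) - h (frac (the_inv_into {1..} f (real (K k))))) 0 < e) sequentially"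
    using eventually_ge_at_top[of 1]
  proof eventually_elim
    case (elim k)
    define q where "q = frac (the_inv_into {1..} f (real (K k)))"
    have "q \<in> {0..1}" using frac_ge_0 frac_lt_1[THEN less_imp_le] q_def by auto
    then have "dist (continuation_ratio f (length (zeck (K k))) q) (h q) < e" using elim(1) by blast
    then show ?case
      using zeck_pos_eq_continuation_ratio[OF f, of "K k"] pos elim(2) q_def by (simp add: dist_real_def)
  qed
qed

lemma zeck_pos_distribution_if_equidistributed:
  assumes f: "uniform_continuation f" and eq: "equidistributed (\<lambda>k. the_inv_into {1..} f (real (K k)))"
  obtains g where "unit_homeo g" "has_limit_distribution (\<lambda>k. zeck_pos (K k)) g"
proof -
  obtain h where lim: "uniform_limit {0..1} (continuation_ratio f) h sequentially" and h: "unit_homeo h"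
    using uniform_continuation_limit[OF f] by blast
  define p where "p k = frac (the_inv_into {1..} f (real (K k)))" for k
  have p: "p k \<in> {0..1}" for k using frac_ge_0 frac_lt_1 less_imp_le unfolding p_def by auto
  have "has_limit_distribution p (\<lambda>y. y)"
    using eq unfolding equidistributed_iff_has_limit_distribution p_def .
  then have "proportion (\<lambda>k. p k \<le> y) \<longlonglongrightarrow> clamp 0 1 y" for y
    using has_limit_distribution_clamp[of p "\<lambda>y. y"] frac_ge_0 frac_lt_1 unfolding p_def by auto
  moreover have "(\<lambda>k. zeck_pos (K k) - h (p k)) \<longlonglongrightarrow> 0"
    using zeck_pos_minus_limit_tendsto[OF f lim] unfolding p_def .
  ultimately have "proportion (\<lambda>k. zeck_pos (K k) \<le> y) \<longlonglongrightarrow> unit_inv h y" for y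
    by (rule proportion_le_tendsto_perturb[OF proportion_unit_homeo_le_tendsto[OF h p] isCont_unit_inv[OF h]])
  then show ?thesis
    using that unit_homeo_unit_inv[OF h] unfolding has_limit_distribution_def by blast
qed

lemma equidistributed_if_zeck_pos_distribution:
  assumes g: "unit_homeo g" and dist: "has_limit_distribution (\<lambda>k. zeck_pos (K k)) g"
  shows "equidistributed (\<lambda>k. the_inv_into {1..} (fib_continuation (unit_inv g)) (real (K k)))"
  unfolding equidistributed_iff_has_limit_distribution has_limit_distribution_def
proof
  fix y :: real assume y: "y \<in> {0..1}"
  have "proportion (\<lambda>k. frac (the_inv_into {1..} (fib_continuation (unit_inv g)) (real (K k))) \<le> y)
      = proportion (\<lambda>k. zeck_pos (K k) \<le> unit_inv g y)"
  proof (rule proportion_cong)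
    fix k :: nat assume "1 \<le> k"
    then have "0 < K k" "zeck_pos (K k) \<in> {0..1}" using pos zeck_pos_K_range[of k] by auto
    then show "(frac (the_inv_into {1..} (fib_continuation (unit_inv g)) (real (K k))) \<le> y)
        = (zeck_pos (K k) \<le> unit_inv g y)"
      using frac_the_inv_into_fib_continuation[OF g] unit_homeo_le_iff_le_unit_inv[OF g, of _ y] y by simp
  qed
  moreover have "proportion (\<lambda>k. zeck_pos (K k) \<le> unit_inv g y) \<longlonglongrightarrow> g (unit_inv g y)"
    using dist unit_inv_range[OF g, of y] unfolding has_limit_distribution_def by blast
  moreover have "g (unit_inv g y) = y" using unit_homeo_unit_inv_eq[OF g, of y] y by (simp add: clamp_01_real)
  ultimately show "proportion (\<lambda>k. frac (the_inv_into {1..} (fib_continuation (unit_inv g)) (real (K k))) \<le> y)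
      \<longlonglongrightarrow> y" by simp
qed

section \<open>Leading block distributions and the distribution of the normalized positions\<close>

lemma LB_prop_eq_tendsto:
  assumes dist: "\<And>y. proportion (\<lambda>k. zeck_pos (K k) \<le> y) \<longlonglongrightarrow> G y" and cont: "\<And>y. isCont G y"
    and c: "zeck_block c"
  shows "LB_prop K (length c) (\<lambda>x. x = c) \<longlonglongrightarrow> G (block_upper_lim c) - G (block_lower_lim c)"
  unfolding LB_prop_eq_proportion using eventually_take_zeck_eq_iff[OF c]
  by (rule proportion_eventually_cong)
    (rule proportion_between_tendsto[OF dist cont cont block_lower_K_tendsto[OF c]
      block_upper_K_tendsto[OF c] block_lower_le_upper])

lemma LB_prop_lex_le_tendsto:
  assumes dist: "\<And>y. proportion (\<lambda>k. zeck_pos (K k) \<le> y) \<longlonglongrightarrow> G y" and cont: "\<And>y. isCont G y"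
    and c: "zeck_block c"
  shows "LB_prop K (length c) (\<lambda>x. lex_le x c) \<longlonglongrightarrow> G (block_upper_lim c)"
  unfolding LB_prop_eq_proportion using eventually_lex_le_take_zeck_iff[OF c]
  by (rule proportion_eventually_cong) (rule proportion_less_tendsto[OF dist cont block_upper_K_tendsto[OF c]])

lemma lim_LB_prop_lex_le_restr_tendsto:
  assumes dist: "\<And>y. proportion (\<lambda>k. zeck_pos (K k) \<le> y) \<longlonglongrightarrow> G y" and cont: "\<And>y. isCont G y"
    and \<mu>: "\<mu> \<in> Fstar" "\<mu> 1 = 1"
  shows "(\<lambda>s. lim (LB_prop K s (\<lambda>x. lex_le x (restr \<mu> s)))) \<longlonglongrightarrow> G (gphi * (dotF \<mu> - 1))"
proof -
  have "(\<lambda>s. G (block_upper_lim (restr \<mu> s))) \<longlonglongrightarrow> G (gphi * (dotF \<mu> - 1))"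
    by (rule isCont_tendsto_compose[OF cont block_upper_lim_restr_tendsto[OF \<mu>]])
  moreover have "eventually (\<lambda>s. G (block_upper_lim (restr \<mu> s)) = lim (LB_prop K s (\<lambda>x. lex_le x (restr \<mu> s))))
      sequentially"
    using eventually_ge_at_top[of 1]
    by (rule eventually_mono)
      (use LB_prop_lex_le_tendsto[OF dist cont zeck_block_restr[OF \<mu>]] in \<open>auto intro: limI[symmetric]\<close>)
  ultimately show ?thesis by (rule Lim_transform_eventually)
qed

lemma cont_LB_dist_if_zeck_pos_distribution:
  assumes g: "unit_homeo g" and dist: "has_limit_distribution (\<lambda>k. zeck_pos (K k)) g"
  shows "cont_LB_dist K"
proof -
  define G where "G y = g (clamp 0 1 y)" for y
  have G_eq: "G y = g y" if "y \<in> {0..1}" for y using that by (simp add: G_def clamp_01_real)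
  have G_dist: "proportion (\<lambda>k. zeck_pos (K k) \<le> y) \<longlonglongrightarrow> G y" for y
    unfolding G_def using has_limit_distribution_clamp[OF _ dist] g zeck_pos_K_range
    unfolding unit_homeo_def by blast
  have G_cont: "isCont G y" for y
    unfolding G_def using g by (intro clamp_continuous_at) (simp add: unit_homeo_def)
  show ?thesis
    unfolding cont_LB_dist_def
  proof (intro conjI allI impI ballI exI[of _ G])
    fix s b assume "2 \<le> s" "is_leading_block s b"
    then show "convergent (LB_prop K s (\<lambda>x. x = b))"
      using LB_prop_eq_tendsto[OF G_dist G_cont] leading_block_zeck_block[of s b]
      unfolding convergent_def by fastforce
  next
    fix \<mu> assume "\<mu> \<in> Fstar" "\<mu> 1 = 1"
    then show "convergent (\<lambda>s. lim (LB_prop K s (\<lambda>x. lex_le x (restr \<mu> s))))"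
      "G (gphi * (dotF \<mu> - 1)) = lim (\<lambda>s. lim (LB_prop K s (\<lambda>x. lex_le x (restr \<mu> s))))"
      using lim_LB_prop_lex_le_restr_tendsto[OF G_dist G_cont] unfolding convergent_def
      by (auto intro: limI[symmetric])
  next
    show "G 0 = 0" "G 1 = 1" using g G_eq[of 0] G_eq[of 1] by (auto simp: unit_homeo_def)
    show "continuous_on {0..1} G" using G_cont by (simp add: continuous_at_imp_continuous_on)
    show "strict_mono_on {0..1} G" "G ` {0..1} \<subseteq> {0..1}"
      using g G_eq unit_homeo_range[OF g] unfolding unit_homeo_def strict_mono_on_def by auto
  qed
qed

lemma LB_prop_lex_le_convergent:
  assumes blocks: "\<forall>s\<ge>2. \<forall>b. is_leading_block s b \<longrightarrow> convergent (LB_prop K s (\<lambda>x. x = b))"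
    and "2 \<le> s"
  shows "convergent (LB_prop K s (\<lambda>x. lex_le x d))"
proof -
  define B where "B = {b. is_leading_block s b \<and> lex_le b d}"
  have "B \<subseteq> {xs. set xs \<subseteq> {0, 1} \<and> length xs = s}"
    using leading_block_zeck_block[of s] zeck_block_digit \<open>2 \<le> s\<close> unfolding B_def
    by (fastforce simp: le_Suc_eq)
  then have "finite B" by (rule finite_subset) (simp add: finite_lists_length_eq)
  have "{k \<in> {1..n}. s \<le> length (zeck (K k)) \<and> lex_le (take s (zeck (K k))) d}
      = (\<Union>b\<in>B. {k \<in> {1..n}. s \<le> length (zeck (K k)) \<and> take s (zeck (K k)) = b})" for n
    using pos unfolding B_def is_leading_block_def has_LB_def by auto
  then have "LB_prop K s (\<lambda>x. lex_le x d) = (\<lambda>n. \<Sum>b\<in>B. LB_prop K s (\<lambda>x. x = b) n)"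
    unfolding LB_prop_def using \<open>finite B\<close>
    by (intro ext) (simp add: card_UN_disjoint sum_divide_distrib[symmetric] disjoint_iff)
  moreover have "\<forall>b\<in>B. convergent (LB_prop K s (\<lambda>x. x = b))" using blocks \<open>2 \<le> s\<close> B_def by auto
  then have "(\<lambda>n. \<Sum>b\<in>B. LB_prop K s (\<lambda>x. x = b) n) \<longlonglongrightarrow> (\<Sum>b\<in>B. lim (LB_prop K s (\<lambda>x. x = b)))"
    by (intro tendsto_sum) (simp add: convergent_LIMSEQ_iff)
  ultimately show ?thesis unfolding convergent_def by auto
qed

text \<open>The event \<open>zeck_pos (K k) \<le> \<gamma>\<close> is squeezed between events "the leading block of
  \<open>K k\<close> is lexicographically at most \<open>c 0 ... 0\<close>", for blocks c with
  \<open>block_lower_lim c\<close> close to \<open>\<gamma>\<close>.\<close>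

lemma proportion_zeck_pos_le_upper:
  assumes inner: "\<And>s d. 2 \<le> s \<Longrightarrow> convergent (LB_prop K s (\<lambda>x. lex_le x d))"
    and c: "zeck_block c"
    and outer: "(\<lambda>s. lim (LB_prop K s (\<lambda>x. lex_le x (restr (block_seq c) s)))) \<longlonglongrightarrow> L"
    and "\<gamma> < block_lower_lim c" "L < M"
  shows "\<exists>Q L'. proportion Q \<longlonglongrightarrow> L' \<and> L' \<le> M \<and> eventually (\<lambda>k. zeck_pos (K k) \<le> \<gamma> \<longrightarrow> Q k) sequentially"
proof -
  have "eventually (\<lambda>s. lim (LB_prop K s (\<lambda>x. lex_le x (restr (block_seq c) s))) < M \<and>
      Suc (Suc (length c)) \<le> s) sequentially"
    using order_tendstoD(2)[OF outer \<open>L < M\<close>] eventually_ge_at_top by (rule eventually_conj)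
  then obtain s where s: "lim (LB_prop K s (\<lambda>x. lex_le x (restr (block_seq c) s))) < M"
    "Suc (Suc (length c)) \<le> s"
    using eventually_happens'[OF sequentially_bot] by blast
  define d where "d = restr (block_seq c) s"
  have d: "zeck_block d" "length d = s"
    using zeck_block_restr[OF block_seq_Fstar[OF c] block_seq_1[OF c]] s(2) d_def by auto
  have "block_upper_lim d = block_upper_lim (c @ replicate (s - length c) 0)"
    unfolding d_def using restr_block_seq[of c s] s(2) by simp
  then have "\<gamma> < block_upper_lim d"
    using \<open>\<gamma> < block_lower_lim c\<close> block_lower_lim_less_upper_lim_append[of c "s - length c"] by linarith
  from order_tendstoD(1)[OF block_upper_K_tendsto[OF d(1)] this]
  have "eventually (\<lambda>k. zeck_pos (K k) \<le> \<gamma> \<longrightarrow> zeck_pos (K k) < block_upper d (length (zeck (K k)))) sequentially"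
    by (rule eventually_mono) auto
  then have "eventually (\<lambda>k. zeck_pos (K k) \<le> \<gamma> \<longrightarrow>
      length d \<le> length (zeck (K k)) \<and> lex_le (take (length d) (zeck (K k))) d) sequentially"
    using eventually_lex_le_take_zeck_iff[OF d(1)] by eventually_elim auto
  moreover have "proportion (\<lambda>k. length d \<le> length (zeck (K k)) \<and> lex_le (take (length d) (zeck (K k))) d)
      \<longlonglongrightarrow> lim (LB_prop K s (\<lambda>x. lex_le x d))"
    using inner[of s d] s(2) d(2) unfolding convergent_LIMSEQ_iff LB_prop_eq_proportion by simp
  ultimately show ?thesis using s(1) unfolding d_def by (intro exI conjI) auto
qed

lemma proportion_zeck_pos_le_lower:
  assumes inner: "\<And>s d. 2 \<le> s \<Longrightarrow> convergent (LB_prop K s (\<lambda>x. lex_le x d))"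
    and c: "zeck_block c"
    and outer: "(\<lambda>s. lim (LB_prop K s (\<lambda>x. lex_le x (restr (block_seq c) s)))) \<longlonglongrightarrow> L"
    and "block_lower_lim c < \<gamma>" "M < L"
  shows "\<exists>Q L'. proportion Q \<longlonglongrightarrow> L' \<and> M \<le> L' \<and> eventually (\<lambda>k. Q k \<longrightarrow> zeck_pos (K k) \<le> \<gamma>) sequentially"
proof -
  have "eventually (\<lambda>s. M < lim (LB_prop K s (\<lambda>x. lex_le x (restr (block_seq c) s))) \<and>
      block_upper_lim (restr (block_seq c) s) < \<gamma> \<and> 2 \<le> s) sequentially"
    using order_tendstoD(1)[OF outer \<open>M < L\<close>]
      order_tendstoD(2)[OF block_upper_lim_restr_block_seq_tendsto[OF c] \<open>block_lower_lim c < \<gamma>\<close>]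
      eventually_ge_at_top
    by (intro eventually_conj)
  then obtain s where s: "M < lim (LB_prop K s (\<lambda>x. lex_le x (restr (block_seq c) s)))"
    "block_upper_lim (restr (block_seq c) s) < \<gamma>" "2 \<le> s"
    using eventually_happens'[OF sequentially_bot] by blast
  define d where "d = restr (block_seq c) s"
  have d: "zeck_block d" "length d = s"
    using zeck_block_restr[OF block_seq_Fstar[OF c] block_seq_1[OF c]] s(3) d_def by auto
  have "eventually (\<lambda>k. block_upper d (length (zeck (K k))) < \<gamma>) sequentially"
    using order_tendstoD(2)[OF block_upper_K_tendsto[OF d(1)]] s(2) d_def by blast
  then have "eventually (\<lambda>k. length d \<le> length (zeck (K k)) \<and> lex_le (take (length d) (zeck (K k))) d
      \<longrightarrow> zeck_pos (K k) \<le> \<gamma>) sequentially"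
    using eventually_lex_le_take_zeck_iff[OF d(1)] by eventually_elim auto
  moreover have "proportion (\<lambda>k. length d \<le> length (zeck (K k)) \<and> lex_le (take (length d) (zeck (K k))) d)
      \<longlonglongrightarrow> lim (LB_prop K s (\<lambda>x. lex_le x d))"
    using inner[of s d] s(3) d(2) unfolding convergent_LIMSEQ_iff LB_prop_eq_proportion by simp
  ultimately show ?thesis using s(1) unfolding d_def by (intro exI conjI) auto
qed

lemma proportion_zeck_pos_le_tendsto:
  assumes inner: "\<And>s d. 2 \<le> s \<Longrightarrow> convergent (LB_prop K s (\<lambda>x. lex_le x d))"
    and outer: "\<And>c. zeck_block c \<Longrightarrow>
      (\<lambda>s. lim (LB_prop K s (\<lambda>x. lex_le x (restr (block_seq c) s)))) \<longlonglongrightarrow> g (block_lower_lim c)"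
    and g: "unit_homeo g" and \<gamma>: "\<gamma> \<in> {0..1}"
  shows "proportion (\<lambda>k. zeck_pos (K k) \<le> \<gamma>) \<longlonglongrightarrow> g \<gamma>"
proof (rule proportion_tendsto_squeeze)
  fix e :: real assume "e > 0"
  then have "\<exists>\<delta>>0. \<forall>y\<in>{0..1}. dist y \<gamma> < \<delta> \<longrightarrow> dist (g y) (g \<gamma>) < e"
    using g \<gamma> unfolding unit_homeo_def continuous_on_iff by blast
  then obtain \<delta> where "\<delta> > 0" and \<delta>: "\<And>y. y \<in> {0..1} \<Longrightarrow> \<bar>y - \<gamma>\<bar> < \<delta> \<Longrightarrow> \<bar>g y - g \<gamma>\<bar> < e"
    unfolding dist_real_def by blast
  have upper: "\<exists>Q L. proportion Q \<longlonglongrightarrow> L \<and> L \<le> g \<gamma> + e \<and>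
      eventually (\<lambda>k. zeck_pos (K k) \<le> \<gamma> \<longrightarrow> Q k) sequentially"
  proof (cases "\<gamma> = 1")
    case True
    then show ?thesis using proportion_True_tendsto[of "\<lambda>k. True"] g \<open>e > 0\<close>
      by (intro exI[of _ "\<lambda>k. True"] exI[of _ 1]) (auto simp: unit_homeo_def)
  next
    case False
    then obtain c where c: "zeck_block c" "\<gamma> < block_lower_lim c" "block_lower_lim c < min 1 (\<gamma> + \<delta>)"
      using block_lower_lim_dense[of \<gamma> "min 1 (\<gamma> + \<delta>)"] \<gamma> \<open>\<delta> > 0\<close> by auto
    then have "g (block_lower_lim c) < g \<gamma> + e" using \<delta>[of "block_lower_lim c"] \<gamma> by (auto simp: abs_less_iff)
    from proportion_zeck_pos_le_upper[OF inner c(1) outer[OF c(1)] c(2) this] show ?thesis .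
  qed
  have lower: "\<exists>Q L. proportion Q \<longlonglongrightarrow> L \<and> g \<gamma> - e \<le> L \<and>
      eventually (\<lambda>k. Q k \<longrightarrow> zeck_pos (K k) \<le> \<gamma>) sequentially"
  proof (cases "\<gamma> = 0")
    case True
    then show ?thesis using proportion_False g \<open>e > 0\<close>
      by (intro exI[of _ "\<lambda>k. False"] exI[of _ 0]) (auto simp: unit_homeo_def)
  next
    case False
    then obtain c where c: "zeck_block c" "max 0 (\<gamma> - \<delta>) < block_lower_lim c" "block_lower_lim c < \<gamma>"
      using block_lower_lim_dense[of "max 0 (\<gamma> - \<delta>)" \<gamma>] \<gamma> \<open>\<delta> > 0\<close> by auto
    then have "g \<gamma> - e < g (block_lower_lim c)" using \<delta>[of "block_lower_lim c"] \<gamma> by (auto simp: abs_less_iff)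
    from proportion_zeck_pos_le_lower[OF inner c(1) outer[OF c(1)] c(3) this] show ?thesis .
  qed
  show "\<exists>Q1 Q2 L1 L2. proportion Q1 \<longlonglongrightarrow> L1 \<and> g \<gamma> - e \<le> L1 \<and> proportion Q2 \<longlonglongrightarrow> L2 \<and> L2 \<le> g \<gamma> + e \<and>
      eventually (\<lambda>k. Q1 k \<longrightarrow> zeck_pos (K k) \<le> \<gamma>) sequentially \<and>
      eventually (\<lambda>k. zeck_pos (K k) \<le> \<gamma> \<longrightarrow> Q2 k) sequentially"
    using upper lower by blast
qed

lemma zeck_pos_distribution_if_cont_LB_dist:
  assumes "cont_LB_dist K"
  obtains g where "unit_homeo g" "has_limit_distribution (\<lambda>k. zeck_pos (K k)) g"
proof -
  obtain g where g: "unit_homeo g"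
    and blocks: "\<forall>s\<ge>2. \<forall>b. is_leading_block s b \<longrightarrow> convergent (LB_prop K s (\<lambda>x. x = b))"
    and conv: "\<forall>\<mu>\<in>Fstar. \<mu> 1 = 1 \<longrightarrow> convergent (\<lambda>s. lim (LB_prop K s (\<lambda>x. lex_le x (restr \<mu> s))))"
    and val: "\<forall>\<mu>\<in>Fstar. \<mu> 1 = 1 \<longrightarrow>
      g (gphi * (dotF \<mu> - 1)) = lim (\<lambda>s. lim (LB_prop K s (\<lambda>x. lex_le x (restr \<mu> s))))"
    using assms unfolding cont_LB_dist_def unit_homeo_def by blast
  have "(\<lambda>s. lim (LB_prop K s (\<lambda>x. lex_le x (restr (block_seq c) s)))) \<longlonglongrightarrow> g (block_lower_lim c)"
    if "zeck_block c" for c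
  proof -
    have \<mu>: "block_seq c \<in> Fstar" "block_seq c 1 = 1" using block_seq_Fstar[OF that] block_seq_1[OF that] .
    show ?thesis
      using conv[rule_format, OF \<mu>] val[rule_format, OF \<mu>]
      unfolding convergent_LIMSEQ_iff block_lower_lim_def dotF_block_seq by simp
  qed
  then have "has_limit_distribution (\<lambda>k. zeck_pos (K k)) g"
    unfolding has_limit_distribution_def
    using proportion_zeck_pos_le_tendsto[OF LB_prop_lex_le_convergent[OF blocks] _ g] by blast
  then show ?thesis using that g by blast
qed

end

theorem theorem5p19:
  fixes K :: "nat \<Rightarrow> nat"
  assumes "\<forall>k\<ge>1. K k > 0"
    and "filterlim K at_top sequentially"
  shows "cont_LB_dist K \<longleftrightarrow>
    (\<exists>f. uniform_continuation f \<and>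
         equidistributed (\<lambda>n. the_inv_into {1..} f (real (K n))))"
proof -
  interpret zeck_sequence K using assms by unfold_locales
  have "cont_LB_dist K \<longleftrightarrow> (\<exists>g. unit_homeo g \<and> has_limit_distribution (\<lambda>k. zeck_pos (K k)) g)"
    using cont_LB_dist_if_zeck_pos_distribution zeck_pos_distribution_if_cont_LB_dist by metis
  also have "\<dots> \<longleftrightarrow> (\<exists>f. uniform_continuation f \<and> equidistributed (\<lambda>n. the_inv_into {1..} f (real (K n))))"
    using zeck_pos_distribution_if_equidistributed equidistributed_if_zeck_pos_distribution
      uniform_continuation_fib_continuation[OF unit_homeo_unit_inv] by metis
  finally show ?thesis .
qed

end
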